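(* In the setup below: (i) $G'$ has $p$-rank $d_p G'=s$, and $G'_{[2]}=(G')^p[G',G']$, so $(G')^{p,el}\simeq G'/G'_{[2]}$; (ii) for every $n\geq 1$, $G'_{[n]}$ is normal in $G'$, the quotient $G'_{[n]}/G'_{[n+1]}$ is an elementary abelian $p$-group, and $G'$ acts trivially by conjugation on $G'_{[n]}/G'_{[n+1]}$; (iii) each $G'_{[n]}$ is open in $G'$ and $\bigcap_n G'_{[n]}=\{1\}$.
   Context: $p$ is an odd prime; $GL_m^1=\{A\in GL_m(\mathbb Z_p): A\equiv 1\bmod p\}$. A pro-$p$ group $G$ is uniform if it is finitely generated, powerful, and with $G_1=G$, $G_{n+1}=G_n^p[G,G_n]$, the $p$-power maps $G_n/G_{n+1}\to G_{n+1}/G_{n+2}$ are isomorphisms. Let $G\subset GL_m^1$ be a closed uniform subgroup, fix $k\geq1$ and $g_1,\dots,g_s\in G_k$ whose images in $G_k/G_{k+1}$ are $\mathbb F_p$-linearly independent, let $G'$ be the closed subgroup generated by the $g_i$, and put $G'_{[n]}=G'\cap G_{n+k-1}$. For a pro-$p$ group $H$, $d_pH=\dim_{\mathbb F_p}H/H^p[H,H]$ and $H^{p,el}=H/H^p[H,H]$. *)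

theory Defs
  imports "HOL-Algebra.Algebra"
begin

text \<open>p-adic m x m matrices are encoded as compatible families of integer matrices
 modulo p^n (inverse limit of M_m(Z/p^n Z)).  A n i j is the (i,j) entry reduced mod p^n,
 represented in [0, p^n); entries outside the index range m x m are 0.\<close>

type_synonym pmat = "nat \<Rightarrow> nat \<Rightarrow> nat \<Rightarrow> int"

definition padic_mat :: "nat \<Rightarrow> nat \<Rightarrow> pmat \<Rightarrow> bool" where
  "padic_mat p m A \<longleftrightarrow>
     (\<forall>n i j. (m \<le> i \<or> m \<le> j) \<longrightarrow> A n i j = 0) \<and>
     (\<forall>n i j. 0 \<le> A n i j \<and> A n i j < int p ^ n) \<and>
     (\<forall>n i j. A n i j = A (Suc n) i j mod int p ^ n)"

definition pmat_one :: "nat \<Rightarrow> nat \<Rightarrow> pmat" where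
  "pmat_one p m = (\<lambda>n i j. if i = j \<and> i < m then 1 mod (int p ^ n) else 0)"

definition pmat_mult :: "nat \<Rightarrow> nat \<Rightarrow> pmat \<Rightarrow> pmat \<Rightarrow> pmat" where
  "pmat_mult p m A B = (\<lambda>n i j. if i < m \<and> j < m
       then (\<Sum>l<m. A n i l * B n l j) mod int p ^ n else 0)"

text \<open>GL_m^1 = matrices over Z_p congruent to 1 mod p (automatically invertible).\<close>
definition GL1 :: "nat \<Rightarrow> nat \<Rightarrow> pmat monoid" where
  "GL1 p m = \<lparr>carrier = {A. padic_mat p m A \<and> A 1 = pmat_one p m 1},
              monoid.mult = pmat_mult p m, one = pmat_one p m\<rparr>"

text \<open>Topological closure in the profinite (inverse limit) topology: basic neighbourhoods
 of A are {B. B N = A N}.\<close>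
definition pclosure :: "nat \<Rightarrow> nat \<Rightarrow> pmat set \<Rightarrow> pmat set" where
  "pclosure p m S = {A \<in> carrier (GL1 p m). \<forall>N. \<exists>B\<in>S. B N = A N}"

definition pclosed :: "nat \<Rightarrow> nat \<Rightarrow> pmat set \<Rightarrow> bool" where
  "pclosed p m S \<longleftrightarrow> S \<subseteq> carrier (GL1 p m) \<and> pclosure p m S \<subseteq> S"

definition popen_in :: "nat \<Rightarrow> nat \<Rightarrow> pmat set \<Rightarrow> pmat set \<Rightarrow> bool" where
  "popen_in p m Y V \<longleftrightarrow> V \<subseteq> Y \<and> (\<forall>A\<in>V. \<exists>N. \<forall>B\<in>Y. B N = A N \<longrightarrow> B \<in> V)"

definition closed_subgroup :: "nat \<Rightarrow> nat \<Rightarrow> pmat set \<Rightarrow> bool" where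
  "closed_subgroup p m H \<longleftrightarrow> subgroup H (GL1 p m) \<and> pclosed p m H"

definition topgen :: "nat \<Rightarrow> nat \<Rightarrow> pmat set \<Rightarrow> pmat set" where
  "topgen p m S = \<Inter>{H. closed_subgroup p m H \<and> S \<subseteq> H}"

definition gcomm :: "('a, 'b) monoid_scheme \<Rightarrow> 'a \<Rightarrow> 'a \<Rightarrow> 'a" where
  "gcomm G x y = inv\<^bsub>G\<^esub> x \<otimes>\<^bsub>G\<^esub> inv\<^bsub>G\<^esub> y \<otimes>\<^bsub>G\<^esub> x \<otimes>\<^bsub>G\<^esub> y"

definition pstep :: "nat \<Rightarrow> nat \<Rightarrow> pmat set \<Rightarrow> pmat set \<Rightarrow> pmat set" where
  "pstep p m G H = topgen p m ({x [^]\<^bsub>GL1 p m\<^esub> p | x. x \<in> H} \<union>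
                               {gcomm (GL1 p m) x y | x y. x \<in> G \<and> y \<in> H})"

text \<open>Lower p-series: pseries G n = G_n for n \<ge> 1 (G_1 = G, G_{n+1} = G_n^p [G,G_n]);
 the value at 0 is an irrelevant convention.\<close>
fun pseries :: "nat \<Rightarrow> nat \<Rightarrow> pmat set \<Rightarrow> nat \<Rightarrow> pmat set" where
  "pseries p m G 0 = G"
| "pseries p m G (Suc 0) = G"
| "pseries p m G (Suc (Suc n)) = pstep p m G (pseries p m G (Suc n))"

definition topfin_gen :: "nat \<Rightarrow> nat \<Rightarrow> pmat set \<Rightarrow> bool" where
  "topfin_gen p m G \<longleftrightarrow> (\<exists>S. finite S \<and> S \<subseteq> G \<and> topgen p m S = G)"

text \<open>Powerful (p odd): [G,G] \<le> closure of G^p.\<close>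
definition powerful :: "nat \<Rightarrow> nat \<Rightarrow> pmat set \<Rightarrow> bool" where
  "powerful p m G \<longleftrightarrow>
     topgen p m {gcomm (GL1 p m) x y | x y. x \<in> G \<and> y \<in> G}
       \<subseteq> topgen p m {x [^]\<^bsub>GL1 p m\<^esub> p | x. x \<in> G}"

text \<open>Uniform: finitely generated, powerful, and x G_{n+1} \<mapsto> x^p G_{n+2} is a well-defined
 isomorphism G_n/G_{n+1} \<rightarrow> G_{n+1}/G_{n+2} for all n \<ge> 1.\<close>
definition uniform :: "nat \<Rightarrow> nat \<Rightarrow> pmat set \<Rightarrow> bool" where
  "uniform p m G \<longleftrightarrow> closed_subgroup p m G \<and> topfin_gen p m G \<and> powerful p m G \<and>
     (\<forall>n\<ge>1. let \<Gamma> = GL1 p m; A = pseries p m G n; B = pseries p m G (n+1);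
                 C = pseries p m G (n+2) in
        (\<forall>x\<in>A. x [^]\<^bsub>\<Gamma>\<^esub> p \<in> B) \<and>
        (\<forall>x\<in>A. \<forall>y\<in>A. x \<otimes>\<^bsub>\<Gamma>\<^esub> inv\<^bsub>\<Gamma>\<^esub> y \<in> B \<longrightarrow>
             x [^]\<^bsub>\<Gamma>\<^esub> p \<otimes>\<^bsub>\<Gamma>\<^esub> inv\<^bsub>\<Gamma>\<^esub> (y [^]\<^bsub>\<Gamma>\<^esub> p) \<in> C) \<and>
        (\<forall>x\<in>A. \<forall>y\<in>A. (x \<otimes>\<^bsub>\<Gamma>\<^esub> y) [^]\<^bsub>\<Gamma>\<^esub> p \<otimes>\<^bsub>\<Gamma>\<^esub>
             inv\<^bsub>\<Gamma>\<^esub> (x [^]\<^bsub>\<Gamma>\<^esub> p \<otimes>\<^bsub>\<Gamma>\<^esub> y [^]\<^bsub>\<Gamma>\<^esub> p) \<in> C) \<and>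
        (\<forall>x\<in>A. x [^]\<^bsub>\<Gamma>\<^esub> p \<in> C \<longrightarrow> x \<in> B) \<and>
        (\<forall>y\<in>B. \<exists>x\<in>A. y \<otimes>\<^bsub>\<Gamma>\<^esub> inv\<^bsub>\<Gamma>\<^esub> (x [^]\<^bsub>\<Gamma>\<^esub> p) \<in> C))"

text \<open>p-rank d_p H = dim_{F_p} H/H^p[H,H], computed as log_p of the order of this
 elementary abelian quotient.\<close>
definition d_p :: "nat \<Rightarrow> nat \<Rightarrow> pmat set \<Rightarrow> nat" where
  "d_p p m H = (THE d. card {pstep p m H H #>\<^bsub>GL1 p m\<^esub> a | a. a \<in> H} = p ^ d)"

text \<open>The images of g_0..g_{s-1} in G_k/G_{k+1} are F_p-linearly independent.\<close>
definition lin_indep_mod :: "nat \<Rightarrow> nat \<Rightarrow> pmat set \<Rightarrow> nat \<Rightarrow> (nat \<Rightarrow> pmat) \<Rightarrow> nat \<Rightarrow> bool" where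
  "lin_indep_mod p m G k g s \<longleftrightarrow>
     (\<forall>c::nat \<Rightarrow> nat. (\<forall>i<s. c i < p) \<longrightarrow>
        foldr (\<lambda>i acc. g i [^]\<^bsub>GL1 p m\<^esub> c i \<otimes>\<^bsub>GL1 p m\<^esub> acc) [0..<s] \<one>\<^bsub>GL1 p m\<^esub>
          \<in> pseries p m G (k+1) \<longrightarrow> (\<forall>i<s. c i = 0))"

end

theory Submission
  imports Defs
begin

text \<open>
  The lower p-series
  G_n of a closed subgroup lies in the kernel of reduction modulo p^n, because p-th powers, and
  commutators with elements of GL_m^1, raise the level of congruence to the identity by one; so
  the filtration of G' is separated. For uniform G the p-power map G_n/G_(n+1) -> G_(n+1)/G_(n+2)
  is onto and G/G_2 is finite, hence every G_n has finite index in G, and a closed subgroup of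
  finite index is open.

  The quotient of G' by Phi(G') = G'^p [G',G'] is elementary abelian and generated by the images
  of the g_i, so every element of G' is congruent modulo Phi(G') to a product of powers g_i^(c_i)
  with 0 <= c_i < p. As Phi(G') lies in G_(k+1), linear independence of the g_i modulo G_(k+1)
  makes these p^s representatives pairwise distinct modulo Phi(G') and forces
  G' \<inter> G_(k+1) = Phi(G').
\<close>

section \<open>Integer matrices modulo q\<close>

type_synonym imat = "nat \<Rightarrow> nat \<Rightarrow> int"

definition mat_mult :: "nat \<Rightarrow> imat \<Rightarrow> imat \<Rightarrow> imat" where
  "mat_mult m A B = (\<lambda>i j. \<Sum>l<m. A i l * B l j)"

definition mat_one :: imat where
  "mat_one = (\<lambda>i j. if i = j then 1 else 0)"

definition mat_cong :: "nat \<Rightarrow> int \<Rightarrow> imat \<Rightarrow> imat \<Rightarrow> bool" where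
  "mat_cong m q A B \<longleftrightarrow> (\<forall>i<m. \<forall>j<m. A i j mod q = B i j mod q)"

fun mat_pow :: "nat \<Rightarrow> imat \<Rightarrow> nat \<Rightarrow> imat" where
  "mat_pow m M 0 = mat_one"
| "mat_pow m M (Suc n) = mat_mult m (mat_pow m M n) M"

lemma mat_cong_refl [simp]: "mat_cong m q A A"
  by (simp add: mat_cong_def)

lemma mat_cong_sym: "mat_cong m q A B \<Longrightarrow> mat_cong m q B A"
  by (simp add: mat_cong_def)

lemma mat_cong_trans: "mat_cong m q A B \<Longrightarrow> mat_cong m q B C \<Longrightarrow> mat_cong m q A C"
  by (simp add: mat_cong_def)

lemma mat_cong_dvd: "d dvd q \<Longrightarrow> mat_cong m q A B \<Longrightarrow> mat_cong m d A B"
  unfolding mat_cong_def by (metis mod_mod_cancel)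

lemma mat_congI_eq: "(\<And>i j. i < m \<Longrightarrow> j < m \<Longrightarrow> A i j = B i j) \<Longrightarrow> mat_cong m q A B"
  by (simp add: mat_cong_def)

lemma mat_congI_mod:
  "(\<And>i j. i < m \<Longrightarrow> j < m \<Longrightarrow> A i j mod q = B i j mod q) \<Longrightarrow> mat_cong m q A B"
  by (simp add: mat_cong_def)

lemma mat_mult_assoc: "mat_mult m (mat_mult m A B) C = mat_mult m A (mat_mult m B C)"
proof (intro ext)
  fix i j
  have "mat_mult m (mat_mult m A B) C i j = (\<Sum>l<m. \<Sum>k<m. A i k * B k l * C l j)"
    by (simp add: mat_mult_def sum_distrib_right)
  also have "\<dots> = (\<Sum>k<m. \<Sum>l<m. A i k * B k l * C l j)"
    by (rule sum.swap)
  also have "\<dots> = mat_mult m A (mat_mult m B C) i j"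
    by (simp add: mat_mult_def sum_distrib_left mult.assoc)
  finally show "mat_mult m (mat_mult m A B) C i j = mat_mult m A (mat_mult m B C) i j" .
qed

lemma mat_mult_cong:
  assumes "mat_cong m q A A'" "mat_cong m q B B'"
  shows "mat_cong m q (mat_mult m A B) (mat_mult m A' B')"
  unfolding mat_cong_def
proof (intro allI impI)
  fix i j assume ij: "i < m" "j < m"
  have "(A i l * B l j) mod q = (A' i l * B' l j) mod q" if "l < m" for l
  proof -
    have "A i l mod q = A' i l mod q" "B l j mod q = B' l j mod q"
      using assms ij that by (auto simp: mat_cong_def)
    then show ?thesis
      by (metis mod_mult_eq)
  qed
  then have "(\<Sum>l<m. (A i l * B l j) mod q) mod q = (\<Sum>l<m. (A' i l * B' l j) mod q) mod q"
    by (metis (no_types, lifting) lessThan_iff sum.cong)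
  then show "mat_mult m A B i j mod q = mat_mult m A' B' i j mod q"
    by (simp add: mat_mult_def mod_sum_eq)
qed

lemma mat_mult_one_left: "i < m \<Longrightarrow> mat_mult m mat_one B i j = B i j"
proof -
  assume "i < m"
  have "mat_mult m mat_one B i j = (\<Sum>l<m. if i = l then B i j else 0)"
    unfolding mat_mult_def by (rule sum.cong) (auto simp: mat_one_def)
  then show ?thesis
    using \<open>i < m\<close> by simp
qed

lemma mat_mult_one_right: "j < m \<Longrightarrow> mat_mult m A mat_one i j = A i j"
proof -
  assume "j < m"
  have "mat_mult m A mat_one i j = (\<Sum>l<m. if l = j then A i j else 0)"
    unfolding mat_mult_def by (rule sum.cong) (auto simp: mat_one_def)
  then show ?thesis
    using \<open>j < m\<close> by simp
qed

lemma mat_mult_one_plus: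
  fixes a b :: int
  assumes "i < m" "j < m"
  shows "mat_mult m (\<lambda>i j. mat_one i j + a * U i j) (\<lambda>i j. mat_one i j + b * V i j) i j
       = mat_one i j + b * V i j + a * U i j + a * b * mat_mult m U V i j"
proof -
  have "mat_mult m (\<lambda>i j. mat_one i j + a * U i j) (\<lambda>i j. mat_one i j + b * V i j) i j
      = mat_mult m mat_one mat_one i j + b * mat_mult m mat_one V i j
        + a * mat_mult m U mat_one i j + a * b * mat_mult m U V i j"
    by (simp add: mat_mult_def sum.distrib sum_distrib_left algebra_simps)
  then show ?thesis
    using assms by (simp add: mat_mult_one_left mat_mult_one_right)
qed

lemma mat_cong_one_plus:
  assumes "mat_cong m q M mat_one"
  obtains U where "\<And>i j. i < m \<Longrightarrow> j < m \<Longrightarrow> M i j = mat_one i j + q * U i j"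
proof
  fix i j assume "i < m" "j < m"
  then have "q dvd M i j - mat_one i j"
    using assms by (simp add: mat_cong_def mod_eq_dvd_iff)
  then show "M i j = mat_one i j + q * ((M i j - mat_one i j) div q)"
    by simp
qed

lemma mat_pow_one_plus:
  assumes "\<And>i j. i < m \<Longrightarrow> j < m \<Longrightarrow> M i j = mat_one i j + q * U i j"
  shows "mat_cong m (q * q) (mat_pow m M n) (\<lambda>i j. mat_one i j + (int n * q) * U i j)"
proof (induction n)
  case 0
  then show ?case by simp
next
  case (Suc n)
  let ?Mn = "\<lambda>i j. mat_one i j + (int n * q) * U i j"
  have "mat_cong m (q * q) (mat_pow m M (Suc n)) (mat_mult m ?Mn (\<lambda>i j. mat_one i j + q * U i j))"
    using Suc by (simp, intro mat_mult_cong) (auto simp: mat_cong_def assms)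
  moreover have "mat_cong m (q * q) (mat_mult m ?Mn (\<lambda>i j. mat_one i j + q * U i j))
      (\<lambda>i j. mat_one i j + (int (Suc n) * q) * U i j)"
  proof (rule mat_congI_mod)
    fix i j assume ij: "i < m" "j < m"
    have "mat_mult m ?Mn (\<lambda>i j. mat_one i j + q * U i j) i j
        = mat_one i j + (int (Suc n) * q) * U i j + (q * q) * (int n * mat_mult m U U i j)"
      unfolding mat_mult_one_plus[OF ij] by (simp add: algebra_simps)
    then show "mat_mult m ?Mn (\<lambda>i j. mat_one i j + q * U i j) i j mod (q * q)
        = (mat_one i j + (int (Suc n) * q) * U i j) mod (q * q)"
      by simp
  qed
  ultimately show ?case
    by (rule mat_cong_trans)
qed

lemma mat_pow_p_cong_one:
  assumes "j \<ge> 1" and "mat_cong m (int p ^ j) M mat_one"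
  shows "mat_cong m (int p ^ (j + 1)) (mat_pow m M p) mat_one"
proof -
  let ?q = "int p ^ j"
  obtain U where U: "\<And>i l. i < m \<Longrightarrow> l < m \<Longrightarrow> M i l = mat_one i l + ?q * U i l"
    using mat_cong_one_plus[OF assms(2)] by blast
  have "int p ^ (j + 1) dvd ?q * ?q"
    using le_imp_power_dvd[of "j + 1" "j + j" "int p"] assms(1) by (simp add: power_add)
  then have "mat_cong m (int p ^ (j + 1)) (mat_pow m M p) (\<lambda>i l. mat_one i l + (int p * ?q) * U i l)"
    using mat_cong_dvd mat_pow_one_plus[OF U] by blast
  moreover have "mat_cong m (int p ^ (j + 1)) (\<lambda>i l. mat_one i l + (int p * ?q) * U i l) mat_one"
    by (simp add: mat_cong_def power_Suc)
  ultimately show ?thesis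
    by (rule mat_cong_trans)
qed

lemma mat_mult_commute_cong:
  assumes "mat_cong m (int p) M mat_one" and "mat_cong m (int p ^ j) L mat_one"
  shows "mat_cong m (int p ^ (j + 1)) (mat_mult m M L) (mat_mult m L M)"
proof -
  let ?q = "int p ^ j"
  obtain U where U: "\<And>i l. i < m \<Longrightarrow> l < m \<Longrightarrow> M i l = mat_one i l + int p * U i l"
    using mat_cong_one_plus[OF assms(1)] by blast
  obtain V where V: "\<And>i l. i < m \<Longrightarrow> l < m \<Longrightarrow> L i l = mat_one i l + ?q * V i l"
    using mat_cong_one_plus[OF assms(2)] by blast
  let ?M = "\<lambda>i j. mat_one i j + int p * U i j" and ?L = "\<lambda>i j. mat_one i j + ?q * V i j"
  have "mat_cong m (int p ^ (j + 1)) (mat_mult m M L) (mat_mult m ?M ?L)"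
    "mat_cong m (int p ^ (j + 1)) (mat_mult m L M) (mat_mult m ?L ?M)"
    by (intro mat_mult_cong mat_congI_eq; simp add: U V)+
  moreover have "mat_cong m (int p ^ (j + 1)) (mat_mult m ?M ?L) (mat_mult m ?L ?M)"
  proof (rule mat_congI_mod)
    fix i l assume il: "i < m" "l < m"
    let ?R = "mat_one i l + int p * U i l + ?q * V i l"
    have "mat_mult m ?M ?L i l = ?R + int p ^ (j + 1) * mat_mult m U V i l"
      "mat_mult m ?L ?M i l = ?R + int p ^ (j + 1) * mat_mult m V U i l"
      unfolding mat_mult_one_plus[OF il] by (simp_all add: algebra_simps power_Suc)
    then show "mat_mult m ?M ?L i l mod int p ^ (j + 1) = mat_mult m ?L ?M i l mod int p ^ (j + 1)"
      by simp
  qed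
  ultimately show ?thesis
    by (meson mat_cong_sym mat_cong_trans)
qed

section \<open>Conjugation and commutators in a group\<close>

context group
begin

lemma inv_mult_cancel [simp]:
  "x \<in> carrier G \<Longrightarrow> y \<in> carrier G \<Longrightarrow> inv x \<otimes> (x \<otimes> y) = y"
  "x \<in> carrier G \<Longrightarrow> y \<in> carrier G \<Longrightarrow> x \<otimes> (inv x \<otimes> y) = y"
  by (simp_all add: m_assoc[symmetric])

lemma conj_mult:
  "g \<in> carrier G \<Longrightarrow> a \<in> carrier G \<Longrightarrow> b \<in> carrier G \<Longrightarrow>
   g \<otimes> (a \<otimes> b) \<otimes> inv g = (g \<otimes> a \<otimes> inv g) \<otimes> (g \<otimes> b \<otimes> inv g)"
  by (simp add: m_assoc)

lemma conj_inv:
  "g \<in> carrier G \<Longrightarrow> a \<in> carrier G \<Longrightarrow> g \<otimes> inv a \<otimes> inv g = inv (g \<otimes> a \<otimes> inv g)"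
  by (simp add: inv_mult_group m_assoc)

lemma conj_nat_pow:
  "g \<in> carrier G \<Longrightarrow> x \<in> carrier G \<Longrightarrow>
   g \<otimes> x [^] (n::nat) \<otimes> inv g = (g \<otimes> x \<otimes> inv g) [^] n"
proof (induction n)
  case (Suc n)
  then show ?case
    using conj_mult[of g "x [^] n" x] by simp
qed simp

lemma conj_gcomm:
  "g \<in> carrier G \<Longrightarrow> x \<in> carrier G \<Longrightarrow> y \<in> carrier G \<Longrightarrow>
   g \<otimes> gcomm G x y \<otimes> inv g = gcomm G (g \<otimes> x \<otimes> inv g) (g \<otimes> y \<otimes> inv g)"
  by (simp add: gcomm_def conj_mult conj_inv[symmetric])

lemma gcomm_closed: "x \<in> carrier G \<Longrightarrow> y \<in> carrier G \<Longrightarrow> gcomm G x y \<in> carrier G"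
  by (simp add: gcomm_def)

lemma subgroup_nat_pow_closed: "subgroup H G \<Longrightarrow> x \<in> H \<Longrightarrow> x [^] (n::nat) \<in> H"
  by (induction n) (auto intro: subgroup.m_closed subgroup.one_closed)

lemma subgroup_gcomm_closed: "subgroup H G \<Longrightarrow> x \<in> H \<Longrightarrow> y \<in> H \<Longrightarrow> gcomm G x y \<in> H"
  unfolding gcomm_def by (intro subgroup.m_closed subgroup.m_inv_closed)

lemma subgroup_conj_closed:
  "subgroup H G \<Longrightarrow> x \<in> H \<Longrightarrow> y \<in> H \<Longrightarrow> x \<otimes> y \<otimes> inv x \<in> H"
  by (intro subgroup.m_closed subgroup.m_inv_closed)

end

section \<open>The group GL_m^1 of p-adic matrices congruent to 1\<close>

definition mat_reduce :: "nat \<Rightarrow> nat \<Rightarrow> nat \<Rightarrow> imat \<Rightarrow> imat" where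
  "mat_reduce p m N M = (\<lambda>i j. if i < m \<and> j < m then M i j mod int p ^ N else 0)"

definition mat_reduced :: "nat \<Rightarrow> nat \<Rightarrow> nat \<Rightarrow> imat \<Rightarrow> bool" where
  "mat_reduced p m N M \<longleftrightarrow>
     (\<forall>i j. (m \<le> i \<or> m \<le> j \<longrightarrow> M i j = 0) \<and> 0 \<le> M i j \<and> M i j < int p ^ N)"

locale padic_GL1 =
  fixes p m :: nat
  assumes two_le_p: "2 \<le> p"
begin

abbreviation "\<Gamma> \<equiv> GL1 p m"

lemma p_power_pos: "0 < int p ^ N"
  using two_le_p by simp

lemma mat_reduced_level: "padic_mat p m A \<Longrightarrow> mat_reduced p m N (A N)"
  unfolding padic_mat_def mat_reduced_def by blast

lemma mat_reduced_reduce: "mat_reduced p m N (mat_reduce p m N M)"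
  using p_power_pos[of N] by (auto simp: mat_reduced_def mat_reduce_def)

lemma mat_cong_reduce: "mat_cong m (int p ^ N) (mat_reduce p m N M) M"
  by (simp add: mat_cong_def mat_reduce_def)

lemma mat_reduced_eqI:
  assumes "mat_reduced p m N A" "mat_reduced p m N B" "mat_cong m (int p ^ N) A B"
  shows "A = B"
proof (intro ext)
  fix i j
  show "A i j = B i j"
  proof (cases "i < m \<and> j < m")
    case True
    then have "A i j mod int p ^ N = B i j mod int p ^ N"
      using assms(3) by (simp add: mat_cong_def)
    moreover have "A i j mod int p ^ N = A i j" "B i j mod int p ^ N = B i j"
      using assms(1,2) by (auto simp: mat_reduced_def intro: mod_pos_pos_trivial)
    ultimately show ?thesis by simp
  next
    case False
    then show ?thesis using assms(1,2) by (auto simp: mat_reduced_def)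
  qed
qed

lemma pmat_mult_level: "pmat_mult p m A B N = mat_reduce p m N (mat_mult m (A N) (B N))"
  by (simp add: pmat_mult_def mat_reduce_def mat_mult_def)

lemma pmat_one_level: "pmat_one p m N = mat_reduce p m N mat_one"
  by (auto simp: pmat_one_def mat_reduce_def mat_one_def fun_eq_iff)

lemma padic_mat_level_mod:
  assumes "padic_mat p m A" "N \<le> N'"
  shows "A N i j = A N' i j mod int p ^ N"
  using assms(2)
proof (induction N' rule: dec_induct)
  case base
  \<comment> \<open>not by simp: the compatibility equation of \<^const>\<open>padic_mat\<close> makes the simplifier loop\<close>
  have "0 \<le> A N i j" "A N i j < int p ^ N"
    using assms(1) unfolding padic_mat_def by blast+
  then show ?case by (simp add: mod_pos_pos_trivial)
next
  case (step n)
  have "int p ^ N dvd int p ^ n"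
    using step(1) by (simp add: le_imp_power_dvd)
  moreover have "A n i j = A (Suc n) i j mod int p ^ n"
    using assms(1) unfolding padic_mat_def by blast
  ultimately show ?case
    using step.IH by (metis mod_mod_cancel)
qed

lemma padic_mat_level_cong:
  "padic_mat p m A \<Longrightarrow> N \<le> N' \<Longrightarrow> mat_cong m (int p ^ N) (A N) (A N')"
  by (simp add: mat_cong_def padic_mat_level_mod)

lemma padic_mat_level_eq_down:
  assumes "padic_mat p m A" "padic_mat p m B" "N \<le> N'" "A N' = B N'"
  shows "A N = B N"
  by (intro ext) (simp add: padic_mat_level_mod[OF assms(1,3)] padic_mat_level_mod[OF assms(2,3)] assms(4))

lemma GL1_carrier_iff: "A \<in> carrier \<Gamma> \<longleftrightarrow> padic_mat p m A \<and> A 1 = pmat_one p m 1"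
  by (simp add: GL1_def)

lemma GL1_mult [simp]: "A \<otimes>\<^bsub>\<Gamma>\<^esub> B = pmat_mult p m A B"
  by (simp add: GL1_def)

lemma GL1_one [simp]: "\<one>\<^bsub>\<Gamma>\<^esub> = pmat_one p m"
  by (simp add: GL1_def)

lemma pmat_mult_level_cong:
  assumes "mat_cong m (int p ^ N) (A N) M1" "mat_cong m (int p ^ N) (B N) M2"
  shows "mat_cong m (int p ^ N) (pmat_mult p m A B N) (mat_mult m M1 M2)"
  unfolding pmat_mult_level by (rule mat_cong_trans[OF mat_cong_reduce mat_mult_cong[OF assms]])

lemma pmat_one_level_cong: "mat_cong m (int p ^ N) (pmat_one p m N) mat_one"
  unfolding pmat_one_level by (rule mat_cong_reduce)

lemma pmat_mult_levelI:
  assumes "mat_cong m (int p ^ N) (mat_mult m (A N) (B N)) (C N)" "mat_reduced p m N (C N)"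
  shows "pmat_mult p m A B N = C N"
  using assms by (intro mat_reduced_eqI) (auto simp: pmat_mult_level mat_reduced_reduce
      intro: mat_cong_trans[OF mat_cong_reduce])

lemma padic_mat_mult:
  assumes "padic_mat p m A" "padic_mat p m B"
  shows "padic_mat p m (pmat_mult p m A B)"
  unfolding padic_mat_def
proof (intro conjI allI impI)
  fix n i j
  show "m \<le> i \<or> m \<le> j \<Longrightarrow> pmat_mult p m A B n i j = 0"
    "0 \<le> pmat_mult p m A B n i j" "pmat_mult p m A B n i j < int p ^ n"
    using p_power_pos[of n] by (auto simp: pmat_mult_def)
  have "mat_cong m (int p ^ n) (mat_mult m (A n) (B n)) (mat_mult m (A (Suc n)) (B (Suc n)))"
    using assms by (intro mat_mult_cong padic_mat_level_cong) auto
  then show "pmat_mult p m A B n i j = pmat_mult p m A B (Suc n) i j mod int p ^ n"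
    by (auto simp: pmat_mult_level mat_reduce_def mat_cong_def mod_mod_cancel)
qed

lemma padic_mat_one: "padic_mat p m (pmat_one p m)"
  unfolding padic_mat_def
proof (intro conjI allI impI)
  fix n i j
  show "m \<le> i \<or> m \<le> j \<Longrightarrow> pmat_one p m n i j = 0"
    "0 \<le> pmat_one p m n i j" "pmat_one p m n i j < int p ^ n"
    using p_power_pos[of n] by (auto simp: pmat_one_def)
  have "(1::int) mod int p ^ n = (1 mod int p ^ Suc n) mod int p ^ n"
    by (simp add: mod_mod_cancel)
  then show "pmat_one p m n i j = pmat_one p m (Suc n) i j mod int p ^ n"
    by (auto simp: pmat_one_def)
qed

lemma level_eq_one_iff:
  assumes "padic_mat p m A"
  shows "A N = pmat_one p m N \<longleftrightarrow> mat_cong m (int p ^ N) (A N) mat_one"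
proof
  assume "mat_cong m (int p ^ N) (A N) mat_one"
  then show "A N = pmat_one p m N"
    unfolding pmat_one_level
    by (intro mat_reduced_eqI[of N] mat_cong_trans[OF _ mat_cong_sym[OF mat_cong_reduce]])
      (simp_all add: mat_reduced_level[OF assms] mat_reduced_reduce)
qed (use pmat_one_level_cong in simp)

lemma GL1_mult_closed:
  assumes "A \<in> carrier \<Gamma>" "B \<in> carrier \<Gamma>"
  shows "pmat_mult p m A B \<in> carrier \<Gamma>"
proof -
  have "A 1 = pmat_one p m 1" "B 1 = pmat_one p m 1"
    using assms by (simp_all add: GL1_carrier_iff)
  then have "mat_cong m (int p ^ 1) (pmat_mult p m A B 1) (mat_mult m mat_one mat_one)"
    by (intro pmat_mult_level_cong) (simp_all only: pmat_one_level_cong)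
  moreover have "mat_cong m (int p ^ 1) (mat_mult m mat_one mat_one) mat_one"
    by (rule mat_congI_eq) (simp add: mat_mult_one_left)
  ultimately show ?thesis
    using assms padic_mat_mult level_eq_one_iff
    by (metis GL1_carrier_iff mat_cong_trans)
qed

lemma GL1_one_closed: "pmat_one p m \<in> carrier \<Gamma>"
  by (simp add: GL1_carrier_iff padic_mat_one)

lemma GL1_mult_assoc:
  assumes "A \<in> carrier \<Gamma>" "B \<in> carrier \<Gamma>" "C \<in> carrier \<Gamma>"
  shows "pmat_mult p m (pmat_mult p m A B) C = pmat_mult p m A (pmat_mult p m B C)"
proof (rule ext)
  fix N
  have "mat_cong m (int p ^ N) (pmat_mult p m (pmat_mult p m A B) C N)
      (mat_mult m (mat_mult m (A N) (B N)) (C N))"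
    "mat_cong m (int p ^ N) (pmat_mult p m A (pmat_mult p m B C) N)
      (mat_mult m (A N) (mat_mult m (B N) (C N)))"
    by (intro pmat_mult_level_cong; simp add: pmat_mult_level mat_cong_reduce)+
  then have "mat_cong m (int p ^ N) (pmat_mult p m (pmat_mult p m A B) C N)
      (pmat_mult p m A (pmat_mult p m B C) N)"
    by (metis mat_mult_assoc mat_cong_sym mat_cong_trans)
  then show "pmat_mult p m (pmat_mult p m A B) C N = pmat_mult p m A (pmat_mult p m B C) N"
    by (rule mat_reduced_eqI[rotated 2]) (simp_all only: pmat_mult_level mat_reduced_reduce)
qed

lemma GL1_one_left:
  assumes "A \<in> carrier \<Gamma>"
  shows "pmat_mult p m (pmat_one p m) A = A"
proof (rule ext, rule pmat_mult_levelI)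
  fix N
  have "mat_cong m (int p ^ N) (mat_mult m mat_one (A N)) (A N)"
    by (rule mat_congI_eq) (simp add: mat_mult_one_left)
  then show "mat_cong m (int p ^ N) (mat_mult m (pmat_one p m N) (A N)) (A N)"
    by (rule mat_cong_trans[OF mat_mult_cong[OF pmat_one_level_cong mat_cong_refl]])
  show "mat_reduced p m N (A N)"
    using assms by (simp add: GL1_carrier_iff mat_reduced_level)
qed

lemma GL1_one_right:
  assumes "A \<in> carrier \<Gamma>"
  shows "pmat_mult p m A (pmat_one p m) = A"
proof (rule ext, rule pmat_mult_levelI)
  fix N
  have "mat_cong m (int p ^ N) (mat_mult m (A N) mat_one) (A N)"
    by (rule mat_congI_eq) (simp add: mat_mult_one_right)
  then show "mat_cong m (int p ^ N) (mat_mult m (A N) (pmat_one p m N)) (A N)"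
    by (rule mat_cong_trans[OF mat_mult_cong[OF mat_cong_refl pmat_one_level_cong]])
  show "mat_reduced p m N (A N)"
    using assms by (simp add: GL1_carrier_iff mat_reduced_level)
qed

lemma monoid_GL1: "monoid \<Gamma>"
  by (rule monoidI) (auto simp: GL1_mult_closed GL1_one_closed GL1_mult_assoc GL1_one_left GL1_one_right)

lemma GL1_pow_level_cong: "mat_cong m (int p ^ N) ((A [^]\<^bsub>\<Gamma>\<^esub> (n::nat)) N) (mat_pow m (A N) n)"
  by (induction n) (simp_all add: pmat_one_level_cong pmat_mult_level_cong)

definition cong_subgroup :: "nat \<Rightarrow> pmat set" where
  "cong_subgroup N = {A \<in> carrier \<Gamma>. A N = pmat_one p m N}"

lemma cong_subgroup_iff:
  "A \<in> carrier \<Gamma> \<Longrightarrow> A \<in> cong_subgroup N \<longleftrightarrow> mat_cong m (int p ^ N) (A N) mat_one"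
  unfolding cong_subgroup_def using level_eq_one_iff by (auto simp: GL1_carrier_iff)

lemma cong_subgroup_subset: "cong_subgroup N \<subseteq> carrier \<Gamma>"
  by (auto simp: cong_subgroup_def)

lemma cong_subgroup_antimono:
  assumes "N \<le> N'"
  shows "cong_subgroup N' \<subseteq> cong_subgroup N"
  using padic_mat_level_eq_down[OF _ padic_mat_one assms]
  by (auto simp: cong_subgroup_def GL1_carrier_iff)

lemma one_in_cong_subgroup: "pmat_one p m \<in> cong_subgroup N"
  by (simp add: cong_subgroup_def GL1_one_closed)

lemma cong_subgroup_1: "cong_subgroup 1 = carrier \<Gamma>"
  by (auto simp: cong_subgroup_def GL1_carrier_iff)

lemma cong_subgroup_mult:
  assumes "A \<in> cong_subgroup N" "B \<in> cong_subgroup N"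
  shows "pmat_mult p m A B \<in> cong_subgroup N"
proof -
  have "mat_cong m (int p ^ N) (pmat_mult p m A B N) (mat_mult m mat_one mat_one)"
    using assms by (intro pmat_mult_level_cong) (auto simp: cong_subgroup_def pmat_one_level_cong)
  moreover have "mat_cong m (int p ^ N) (mat_mult m mat_one mat_one) mat_one"
    by (rule mat_congI_eq) (simp add: mat_mult_one_left)
  ultimately show ?thesis
    using assms cong_subgroup_iff GL1_mult_closed cong_subgroup_subset
    by (meson mat_cong_trans subsetD)
qed

lemma cong_subgroup_pow: "A \<in> cong_subgroup N \<Longrightarrow> A [^]\<^bsub>\<Gamma>\<^esub> (n::nat) \<in> cong_subgroup N"
  by (induction n) (simp_all add: one_in_cong_subgroup cong_subgroup_mult)

lemma cong_subgroup_pow_p: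
  assumes "1 \<le> j" and "A \<in> cong_subgroup j"
  shows "A [^]\<^bsub>\<Gamma>\<^esub> p \<in> cong_subgroup (j + 1)"
proof -
  have A: "A \<in> carrier \<Gamma>"
    using assms(2) cong_subgroup_subset by blast
  then have "mat_cong m (int p ^ j) (A (j + 1)) mat_one"
    using assms(2) cong_subgroup_iff padic_mat_level_cong[of A j "j + 1"]
    by (metis GL1_carrier_iff le_add1 mat_cong_sym mat_cong_trans)
  then have "mat_cong m (int p ^ (j + 1)) (mat_pow m (A (j + 1)) p) mat_one"
    by (rule mat_pow_p_cong_one[OF assms(1)])
  then show ?thesis
    using cong_subgroup_iff monoid.nat_pow_closed[OF monoid_GL1 A]
    by (metis GL1_pow_level_cong mat_cong_trans)
qed

lemma pow_p_power_in_cong_subgroup: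
  assumes "A \<in> carrier \<Gamma>"
  shows "A [^]\<^bsub>\<Gamma>\<^esub> (p ^ j) \<in> cong_subgroup (j + 1)"
proof (induction j)
  case 0
  then show ?case
    using assms GL1_one_left cong_subgroup_1 by simp
next
  case (Suc j)
  have "A [^]\<^bsub>\<Gamma>\<^esub> (p ^ Suc j) = (A [^]\<^bsub>\<Gamma>\<^esub> (p ^ j)) [^]\<^bsub>\<Gamma>\<^esub> p"
    using monoid.nat_pow_pow[OF monoid_GL1 assms] by (simp add: mult.commute)
  then show ?case
    using cong_subgroup_pow_p[OF _ Suc] by simp
qed

text \<open>The inverse of A is the limit of the powers A^(p^n - 1): at level n they agree with the
  inverse, because A^(p^n) is the identity modulo p^n.\<close>

lemma pow_pred_p_power_level_stable:
  assumes "A \<in> carrier \<Gamma>"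
  shows "(A [^]\<^bsub>\<Gamma>\<^esub> (p ^ Suc n - 1)) n = (A [^]\<^bsub>\<Gamma>\<^esub> (p ^ n - 1)) n"
proof -
  have "p ^ n \<ge> 1"
    using two_le_p by simp
  then have e: "p ^ Suc n - 1 = (p ^ n - 1) + p ^ n * (p - 1)"
    using two_le_p by (simp add: algebra_simps)
  have "(A [^]\<^bsub>\<Gamma>\<^esub> (p ^ n)) [^]\<^bsub>\<Gamma>\<^esub> (p - 1) \<in> cong_subgroup n"
    using cong_subgroup_antimono pow_p_power_in_cong_subgroup[OF assms] cong_subgroup_pow
    by (metis le_add1 subsetD)
  moreover have "A [^]\<^bsub>\<Gamma>\<^esub> (p ^ Suc n - 1)
      = pmat_mult p m (A [^]\<^bsub>\<Gamma>\<^esub> (p ^ n - 1)) ((A [^]\<^bsub>\<Gamma>\<^esub> (p ^ n)) [^]\<^bsub>\<Gamma>\<^esub> (p - 1))"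
    unfolding e using monoid.nat_pow_mult[OF monoid_GL1 assms] monoid.nat_pow_pow[OF monoid_GL1 assms]
    by (metis GL1_mult)
  ultimately have "(A [^]\<^bsub>\<Gamma>\<^esub> (p ^ Suc n - 1)) n
      = pmat_mult p m (A [^]\<^bsub>\<Gamma>\<^esub> (p ^ n - 1)) (pmat_one p m) n"
    by (simp add: pmat_mult_level cong_subgroup_def)
  then show ?thesis
    using GL1_one_right monoid.nat_pow_closed[OF monoid_GL1 assms] by simp
qed

lemma GL1_diagonal_limit:
  assumes "\<And>n. P n \<in> carrier \<Gamma>" and "\<And>n. P (Suc n) n = P n n"
  shows "(\<lambda>n. P n n) \<in> carrier \<Gamma>"
  unfolding GL1_carrier_iff padic_mat_def
proof (intro conjI allI impI)
  have P: "padic_mat p m (P n)" for n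
    using assms(1) by (simp add: GL1_carrier_iff)
  fix n i j
  show "m \<le> i \<or> m \<le> j \<Longrightarrow> P n n i j = 0" "0 \<le> P n n i j" "P n n i j < int p ^ n"
    using P unfolding padic_mat_def by blast+
  show "P n n i j = P (Suc n) (Suc n) i j mod int p ^ n"
    using P[of "Suc n"] assms(2)[of n] unfolding padic_mat_def by metis
next
  show "P 1 1 = pmat_one p m 1"
    using assms(1) by (simp add: GL1_carrier_iff)
qed

lemma GL1_left_inverse:
  assumes "A \<in> carrier \<Gamma>"
  shows "\<exists>B\<in>carrier \<Gamma>. pmat_mult p m B A = pmat_one p m"
proof
  define P where "P n = A [^]\<^bsub>\<Gamma>\<^esub> (p ^ n - 1)" for n
  show "(\<lambda>n. P n n) \<in> carrier \<Gamma>"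
    by (rule GL1_diagonal_limit)
      (simp_all only: P_def pow_pred_p_power_level_stable[OF assms] monoid.nat_pow_closed[OF monoid_GL1 assms])
  have "pmat_mult p m (P n) A = A [^]\<^bsub>\<Gamma>\<^esub> (p ^ n)" for n
  proof -
    have "p ^ n = Suc (p ^ n - 1)"
      using two_le_p by simp
    then show ?thesis
      unfolding P_def by (metis nat_pow_Suc GL1_mult)
  qed
  moreover have "(A [^]\<^bsub>\<Gamma>\<^esub> (p ^ n)) n = pmat_one p m n" for n
    using pow_p_power_in_cong_subgroup[OF assms] cong_subgroup_antimono[of n "n + 1"]
    by (auto simp: cong_subgroup_def)
  ultimately show "pmat_mult p m (\<lambda>n. P n n) A = pmat_one p m"
    by (simp add: fun_eq_iff pmat_mult_level)
qed

lemma group_GL1: "group \<Gamma>"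
  by (rule groupI) (auto simp: GL1_mult_closed GL1_one_closed GL1_mult_assoc GL1_one_left GL1_left_inverse)

end

sublocale padic_GL1 \<subseteq> GL: group "GL1 p m"
  by (rule group_GL1)

section \<open>Topology and closed subgroups of GL_m^1\<close>

context padic_GL1
begin

declare GL1_mult [simp del] GL1_one [simp del]

lemma GL1_mult_level_eq: "x N = x' N \<Longrightarrow> y N = y' N \<Longrightarrow> (x \<otimes>\<^bsub>\<Gamma>\<^esub> y) N = (x' \<otimes>\<^bsub>\<Gamma>\<^esub> y') N"
  by (simp add: GL1_mult pmat_mult_level)

lemma GL1_inv_level_eq:
  assumes "x \<in> carrier \<Gamma>" "x' \<in> carrier \<Gamma>" "x N = x' N"
  shows "(inv\<^bsub>\<Gamma>\<^esub> x) N = (inv\<^bsub>\<Gamma>\<^esub> x') N"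
proof -
  have "(inv\<^bsub>\<Gamma>\<^esub> x) N = ((inv\<^bsub>\<Gamma>\<^esub> x \<otimes>\<^bsub>\<Gamma>\<^esub> x') \<otimes>\<^bsub>\<Gamma>\<^esub> inv\<^bsub>\<Gamma>\<^esub> x') N"
    using assms by (simp add: GL.m_assoc)
  also have "\<dots> = ((inv\<^bsub>\<Gamma>\<^esub> x \<otimes>\<^bsub>\<Gamma>\<^esub> x) \<otimes>\<^bsub>\<Gamma>\<^esub> inv\<^bsub>\<Gamma>\<^esub> x') N"
    by (intro GL1_mult_level_eq refl) (simp add: assms(3))
  also have "\<dots> = (inv\<^bsub>\<Gamma>\<^esub> x') N"
    using assms by simp
  finally show ?thesis .
qed

lemma GL1_level_eq_down:
  "x \<in> carrier \<Gamma> \<Longrightarrow> y \<in> carrier \<Gamma> \<Longrightarrow> N \<le> N' \<Longrightarrow> x N' = y N' \<Longrightarrow> x N = y N"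
  using padic_mat_level_eq_down GL1_carrier_iff by blast

lemma pclosed_preimage:
  assumes f: "\<And>x. x \<in> carrier \<Gamma> \<Longrightarrow> f x \<in> carrier \<Gamma>"
    and f_level: "\<And>x y N. x \<in> carrier \<Gamma> \<Longrightarrow> y \<in> carrier \<Gamma> \<Longrightarrow> x N = y N \<Longrightarrow> f x N = f y N"
    and C: "pclosed p m C"
  shows "pclosed p m {x \<in> carrier \<Gamma>. f x \<in> C}"
  unfolding pclosed_def
proof (intro conjI subsetI)
  show "x \<in> carrier \<Gamma>" if "x \<in> {x \<in> carrier \<Gamma>. f x \<in> C}" for x
    using that by blast
next
  fix A assume "A \<in> pclosure p m {x \<in> carrier \<Gamma>. f x \<in> C}"
  then have A: "A \<in> carrier \<Gamma>" and approx: "\<forall>N. \<exists>B\<in>{x \<in> carrier \<Gamma>. f x \<in> C}. B N = A N"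
    by (auto simp: pclosure_def)
  have "f A \<in> pclosure p m C"
    unfolding pclosure_def
  proof (intro CollectI conjI allI)
    fix N
    obtain B where "B \<in> carrier \<Gamma>" "f B \<in> C" "B N = A N"
      using approx by blast
    then show "\<exists>B\<in>C. B N = f A N"
      using f_level[of B A N] A by metis
  qed (use f A in blast)
  then show "A \<in> {x \<in> carrier \<Gamma>. f x \<in> C}"
    using C A by (auto simp: pclosed_def)
qed

lemma pclosed_Un:
  assumes "pclosed p m A" "pclosed p m B"
  shows "pclosed p m (A \<union> B)"
  unfolding pclosed_def
proof (intro conjI subsetI)
  show "Z \<in> carrier \<Gamma>" if "Z \<in> A \<union> B" for Z
    using that assms by (auto simp: pclosed_def)
next
  fix Z assume "Z \<in> pclosure p m (A \<union> B)"
  then have Z: "Z \<in> carrier \<Gamma>" and approx: "\<And>N. \<exists>Y\<in>A \<union> B. Y N = Z N"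
    by (auto simp: pclosure_def)
  show "Z \<in> A \<union> B"
  proof (cases "\<forall>N. \<exists>Y\<in>A. Y N = Z N")
    case True
    then have "Z \<in> pclosure p m A"
      using Z by (simp add: pclosure_def)
    then show ?thesis
      using assms(1) by (auto simp: pclosed_def)
  next
    case False
    then obtain N0 where N0: "\<And>Y. Y \<in> A \<Longrightarrow> Y N0 \<noteq> Z N0"
      by blast
    have "\<exists>Y\<in>B. Y N = Z N" for N
    proof -
      obtain Y where Y: "Y \<in> A \<union> B" "Y (max N N0) = Z (max N N0)"
        using approx by blast
      have "Y \<in> carrier \<Gamma>"
        using Y(1) assms by (auto simp: pclosed_def)
      then have "Y N0 = Z N0" "Y N = Z N"
        using GL1_level_eq_down[of Y Z _ "max N N0"] Y(2) Z by simp_all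
      then show ?thesis
        using Y(1) N0 by blast
    qed
    then have "Z \<in> pclosure p m B"
      using Z by (simp add: pclosure_def)
    then show ?thesis
      using assms(2) by (auto simp: pclosed_def)
  qed
qed

lemma pclosed_empty: "pclosed p m {}"
  by (simp add: pclosed_def pclosure_def)

lemma pclosed_finite_UN:
  "finite I \<Longrightarrow> (\<And>i. i \<in> I \<Longrightarrow> pclosed p m (F i)) \<Longrightarrow> pclosed p m (\<Union>i\<in>I. F i)"
  by (induction I rule: finite_induct) (auto simp: pclosed_empty intro: pclosed_Un)

lemma r_coset_eq_preimage:
  assumes "H \<subseteq> carrier \<Gamma>" "a \<in> carrier \<Gamma>"
  shows "H #>\<^bsub>\<Gamma>\<^esub> a = {x \<in> carrier \<Gamma>. x \<otimes>\<^bsub>\<Gamma>\<^esub> inv\<^bsub>\<Gamma>\<^esub> a \<in> H}"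
proof
  show "H #>\<^bsub>\<Gamma>\<^esub> a \<subseteq> {x \<in> carrier \<Gamma>. x \<otimes>\<^bsub>\<Gamma>\<^esub> inv\<^bsub>\<Gamma>\<^esub> a \<in> H}"
    using assms by (auto simp: r_coset_def GL.m_assoc)
  show "{x \<in> carrier \<Gamma>. x \<otimes>\<^bsub>\<Gamma>\<^esub> inv\<^bsub>\<Gamma>\<^esub> a \<in> H} \<subseteq> H #>\<^bsub>\<Gamma>\<^esub> a"
  proof
    fix x assume x: "x \<in> {x \<in> carrier \<Gamma>. x \<otimes>\<^bsub>\<Gamma>\<^esub> inv\<^bsub>\<Gamma>\<^esub> a \<in> H}"
    then have "x = (x \<otimes>\<^bsub>\<Gamma>\<^esub> inv\<^bsub>\<Gamma>\<^esub> a) \<otimes>\<^bsub>\<Gamma>\<^esub> a"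
      using assms by (simp add: GL.m_assoc)
    then show "x \<in> H #>\<^bsub>\<Gamma>\<^esub> a"
      using x unfolding r_coset_def by blast
  qed
qed

lemma pclosed_r_coset:
  assumes "pclosed p m H" "a \<in> carrier \<Gamma>"
  shows "pclosed p m (H #>\<^bsub>\<Gamma>\<^esub> a)"
proof -
  have "pclosed p m {x \<in> carrier \<Gamma>. x \<otimes>\<^bsub>\<Gamma>\<^esub> inv\<^bsub>\<Gamma>\<^esub> a \<in> H}"
    by (rule pclosed_preimage[OF _ _ assms(1)]) (auto simp: assms(2) intro: GL1_mult_level_eq)
  moreover have "H \<subseteq> carrier \<Gamma>"
    using assms(1) by (simp add: pclosed_def)
  ultimately show ?thesis
    by (simp add: r_coset_eq_preimage[OF _ assms(2)])
qed

lemma closed_subgroup_carrier: "closed_subgroup p m (carrier \<Gamma>)"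
  by (simp add: closed_subgroup_def pclosed_def pclosure_def GL.subgroup_self)

lemma closed_subgroup_subset: "closed_subgroup p m H \<Longrightarrow> H \<subseteq> carrier \<Gamma>"
  by (simp add: closed_subgroup_def pclosed_def)

lemma closed_subgroup_topgen:
  assumes "S \<subseteq> carrier \<Gamma>"
  shows "closed_subgroup p m (topgen p m S)"
proof -
  let ?F = "{H. closed_subgroup p m H \<and> S \<subseteq> H}"
  have carrier_in: "carrier \<Gamma> \<in> ?F"
    using closed_subgroup_carrier assms by simp
  have "subgroup (\<Inter>?F) \<Gamma>"
    by (rule GL.subgroups_Inter) (use carrier_in in \<open>auto simp: closed_subgroup_def\<close>)
  moreover have "pclosure p m (\<Inter>?F) \<subseteq> H" if "H \<in> ?F" for H
  proof -
    have "pclosure p m (\<Inter>?F) \<subseteq> pclosure p m H"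
      using that unfolding pclosure_def by blast
    then show ?thesis
      using that by (auto simp: closed_subgroup_def pclosed_def)
  qed
  ultimately show ?thesis
    using carrier_in by (auto simp: topgen_def closed_subgroup_def pclosed_def)
qed

lemma subset_topgen: "S \<subseteq> topgen p m S"
  by (auto simp: topgen_def)

lemma topgen_least: "closed_subgroup p m H \<Longrightarrow> S \<subseteq> H \<Longrightarrow> topgen p m S \<subseteq> H"
  by (auto simp: topgen_def)

lemma closed_subgroup_conj_preimage:
  assumes L: "closed_subgroup p m L" and g: "g \<in> carrier \<Gamma>"
  shows "closed_subgroup p m {x \<in> carrier \<Gamma>. g \<otimes>\<^bsub>\<Gamma>\<^esub> x \<otimes>\<^bsub>\<Gamma>\<^esub> inv\<^bsub>\<Gamma>\<^esub> g \<in> L}"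
  unfolding closed_subgroup_def
proof
  have L_sub: "subgroup L \<Gamma>"
    using L by (simp add: closed_subgroup_def)
  show "subgroup {x \<in> carrier \<Gamma>. g \<otimes>\<^bsub>\<Gamma>\<^esub> x \<otimes>\<^bsub>\<Gamma>\<^esub> inv\<^bsub>\<Gamma>\<^esub> g \<in> L} \<Gamma>"
  proof (rule GL.subgroupI)
    show "{x \<in> carrier \<Gamma>. g \<otimes>\<^bsub>\<Gamma>\<^esub> x \<otimes>\<^bsub>\<Gamma>\<^esub> inv\<^bsub>\<Gamma>\<^esub> g \<in> L} \<noteq> {}"
      using g subgroup.one_closed[OF L_sub] by (auto intro!: exI[of _ "\<one>\<^bsub>\<Gamma>\<^esub>"])
  next
    fix a assume "a \<in> {x \<in> carrier \<Gamma>. g \<otimes>\<^bsub>\<Gamma>\<^esub> x \<otimes>\<^bsub>\<Gamma>\<^esub> inv\<^bsub>\<Gamma>\<^esub> g \<in> L}"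
    then show "inv\<^bsub>\<Gamma>\<^esub> a \<in> {x \<in> carrier \<Gamma>. g \<otimes>\<^bsub>\<Gamma>\<^esub> x \<otimes>\<^bsub>\<Gamma>\<^esub> inv\<^bsub>\<Gamma>\<^esub> g \<in> L}"
      using g GL.conj_inv[of g a] subgroup.m_inv_closed[OF L_sub] by auto
  next
    fix a b
    assume "a \<in> {x \<in> carrier \<Gamma>. g \<otimes>\<^bsub>\<Gamma>\<^esub> x \<otimes>\<^bsub>\<Gamma>\<^esub> inv\<^bsub>\<Gamma>\<^esub> g \<in> L}"
      and "b \<in> {x \<in> carrier \<Gamma>. g \<otimes>\<^bsub>\<Gamma>\<^esub> x \<otimes>\<^bsub>\<Gamma>\<^esub> inv\<^bsub>\<Gamma>\<^esub> g \<in> L}"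
    then show "a \<otimes>\<^bsub>\<Gamma>\<^esub> b \<in> {x \<in> carrier \<Gamma>. g \<otimes>\<^bsub>\<Gamma>\<^esub> x \<otimes>\<^bsub>\<Gamma>\<^esub> inv\<^bsub>\<Gamma>\<^esub> g \<in> L}"
      using g GL.conj_mult[of g a b] subgroup.m_closed[OF L_sub] by auto
  qed auto
  show "pclosed p m {x \<in> carrier \<Gamma>. g \<otimes>\<^bsub>\<Gamma>\<^esub> x \<otimes>\<^bsub>\<Gamma>\<^esub> inv\<^bsub>\<Gamma>\<^esub> g \<in> L}"
    by (rule pclosed_preimage) (use g L in \<open>auto simp: closed_subgroup_def intro: GL1_mult_level_eq\<close>)
qed

lemma topgen_conj_closed:
  assumes S: "S \<subseteq> carrier \<Gamma>" and g: "g \<in> carrier \<Gamma>"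
    and conj_S: "\<And>x. x \<in> S \<Longrightarrow> g \<otimes>\<^bsub>\<Gamma>\<^esub> x \<otimes>\<^bsub>\<Gamma>\<^esub> inv\<^bsub>\<Gamma>\<^esub> g \<in> topgen p m S"
    and x: "x \<in> topgen p m S"
  shows "g \<otimes>\<^bsub>\<Gamma>\<^esub> x \<otimes>\<^bsub>\<Gamma>\<^esub> inv\<^bsub>\<Gamma>\<^esub> g \<in> topgen p m S"
proof -
  have "topgen p m S \<subseteq> {x \<in> carrier \<Gamma>. g \<otimes>\<^bsub>\<Gamma>\<^esub> x \<otimes>\<^bsub>\<Gamma>\<^esub> inv\<^bsub>\<Gamma>\<^esub> g \<in> topgen p m S}"
    using S conj_S
    by (intro topgen_least[OF closed_subgroup_conj_preimage[OF closed_subgroup_topgen[OF S] g]]) auto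
  then show ?thesis
    using x by blast
qed

lemma closed_subgroup_cong_subgroup: "closed_subgroup p m (cong_subgroup N)"
  unfolding closed_subgroup_def pclosed_def
proof (intro conjI)
  show "cong_subgroup N \<subseteq> carrier \<Gamma>"
    by (rule cong_subgroup_subset)
  show "subgroup (cong_subgroup N) \<Gamma>"
  proof (rule GL.subgroupI)
    fix a assume a: "a \<in> cong_subgroup N"
    then have "(inv\<^bsub>\<Gamma>\<^esub> a) N = (inv\<^bsub>\<Gamma>\<^esub> \<one>\<^bsub>\<Gamma>\<^esub>) N"
      by (intro GL1_inv_level_eq) (auto simp: cong_subgroup_def GL1_one GL1_one_closed)
    then show "inv\<^bsub>\<Gamma>\<^esub> a \<in> cong_subgroup N"
      using a GL.inv_one by (simp add: cong_subgroup_def GL1_one)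
  qed (use one_in_cong_subgroup in \<open>auto simp: cong_subgroup_subset GL1_mult cong_subgroup_mult\<close>)
  show "pclosure p m (cong_subgroup N) \<subseteq> cong_subgroup N"
  proof
  fix x assume x: "x \<in> pclosure p m (cong_subgroup N)"
  then obtain B where "B \<in> cong_subgroup N" "B N = x N"
    unfolding pclosure_def by blast
  then show "x \<in> cong_subgroup N"
    using x by (auto simp: pclosure_def cong_subgroup_def)
  qed
qed

lemma GL1_mult_commute_level:
  assumes x: "x \<in> carrier \<Gamma>" and y: "y \<in> cong_subgroup j"
  shows "(x \<otimes>\<^bsub>\<Gamma>\<^esub> y) (j + 1) = (y \<otimes>\<^bsub>\<Gamma>\<^esub> x) (j + 1)"
proof -
  have y_carrier: "y \<in> carrier \<Gamma>"
    using y cong_subgroup_subset by blast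
  have padic: "padic_mat p m x" "padic_mat p m y"
    using x y_carrier by (auto simp: GL1_carrier_iff)
  have "x \<in> cong_subgroup 1"
    using x cong_subgroup_1 by blast
  then have "mat_cong m (int p ^ 1) (x 1) mat_one"
    using cong_subgroup_iff[OF x] by blast
  then have x_cong: "mat_cong m (int p) (x (j + 1)) mat_one"
    using mat_cong_trans[OF mat_cong_sym[OF padic_mat_level_cong[OF padic(1), of 1 "j + 1"]]] by simp
  have "mat_cong m (int p ^ j) (y j) mat_one"
    using cong_subgroup_iff[OF y_carrier] y by blast
  then have y_cong: "mat_cong m (int p ^ j) (y (j + 1)) mat_one"
    using mat_cong_trans[OF mat_cong_sym[OF padic_mat_level_cong[OF padic(2), of j "j + 1"]]] by simp
  have "mat_cong m (int p ^ (j + 1)) ((x \<otimes>\<^bsub>\<Gamma>\<^esub> y) (j + 1)) ((y \<otimes>\<^bsub>\<Gamma>\<^esub> x) (j + 1))"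
    unfolding GL1_mult
    using pmat_mult_level_cong[OF mat_cong_refl mat_cong_refl, where A=x and B=y and N="j + 1"]
      pmat_mult_level_cong[OF mat_cong_refl mat_cong_refl, where A=y and B=x and N="j + 1"]
      mat_mult_commute_cong[OF x_cong y_cong]
    by (meson mat_cong_sym mat_cong_trans)
  then show ?thesis
    by (rule mat_reduced_eqI[rotated 2]) (simp_all add: GL1_mult pmat_mult_level mat_reduced_reduce)
qed

lemma gcomm_cong_subgroup:
  assumes x: "x \<in> carrier \<Gamma>" and y: "y \<in> cong_subgroup j"
  shows "gcomm \<Gamma> x y \<in> cong_subgroup (j + 1)"
proof -
  have y_carrier: "y \<in> carrier \<Gamma>"
    using y cong_subgroup_subset by blast
  have gcomm_eq: "gcomm \<Gamma> x y = inv\<^bsub>\<Gamma>\<^esub> (y \<otimes>\<^bsub>\<Gamma>\<^esub> x) \<otimes>\<^bsub>\<Gamma>\<^esub> (x \<otimes>\<^bsub>\<Gamma>\<^esub> y)"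
    using x y_carrier by (simp add: gcomm_def GL.inv_mult_group GL.m_assoc)
  have "(gcomm \<Gamma> x y) (j + 1) = (inv\<^bsub>\<Gamma>\<^esub> (y \<otimes>\<^bsub>\<Gamma>\<^esub> x) \<otimes>\<^bsub>\<Gamma>\<^esub> (y \<otimes>\<^bsub>\<Gamma>\<^esub> x)) (j + 1)"
    unfolding gcomm_eq by (rule GL1_mult_level_eq) (simp_all only: GL1_mult_commute_level[OF x y])
  also have "\<dots> = pmat_one p m (j + 1)"
    using x y_carrier by (simp add: GL1_one)
  finally show ?thesis
    using x y_carrier GL.gcomm_closed by (simp add: cong_subgroup_def)
qed

lemma pclosed_avoid_level:
  assumes "finite R" "\<And>r. r \<in> R \<Longrightarrow> pclosed p m (C r) \<and> A \<notin> C r" "A \<in> carrier \<Gamma>"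
  shows "\<exists>N. \<forall>r\<in>R. \<forall>B\<in>C r. B N \<noteq> A N"
  using assms(1,2)
proof (induction R rule: finite_induct)
  case (insert r R)
  have "A \<notin> pclosure p m (C r)"
    using insert.prems[of r] by (auto simp: pclosed_def)
  then obtain N1 where N1: "\<forall>B\<in>C r. B N1 \<noteq> A N1"
    using assms(3) unfolding pclosure_def by blast
  obtain N2 where N2: "\<forall>r'\<in>R. \<forall>B\<in>C r'. B N2 \<noteq> A N2"
    using insert by blast
  have "B (max N1 N2) \<noteq> A (max N1 N2)" if "r' \<in> insert r R" "B \<in> C r'" for r' B
  proof
    assume eq: "B (max N1 N2) = A (max N1 N2)"
    have "B \<in> carrier \<Gamma>"
      using that insert.prems by (auto simp: pclosed_def)
    then have "B N1 = A N1" "B N2 = A N2"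
      using GL1_level_eq_down[of B A _ "max N1 N2"] assms(3) eq by simp_all
    then show False
      using that N1 N2 by auto
  qed
  then show ?case
    by blast
qed simp

definition finite_coset_cover :: "pmat set \<Rightarrow> pmat set \<Rightarrow> bool" where
  "finite_coset_cover A B \<longleftrightarrow> (\<exists>R. finite R \<and> R \<subseteq> A \<and> A \<subseteq> (\<Union>r\<in>R. B #>\<^bsub>\<Gamma>\<^esub> r))"

lemma finite_coset_cover_refl:
  assumes "subgroup A \<Gamma>"
  shows "finite_coset_cover A A"
  unfolding finite_coset_cover_def
proof (intro exI[of _ "{\<one>\<^bsub>\<Gamma>\<^esub>}"] conjI)
  have "A #>\<^bsub>\<Gamma>\<^esub> \<one>\<^bsub>\<Gamma>\<^esub> = A"
    by (rule GL.coset_join2[OF GL.one_closed assms subgroup.one_closed[OF assms]])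
  then show "{\<one>\<^bsub>\<Gamma>\<^esub>} \<subseteq> A" "A \<subseteq> (\<Union>r\<in>{\<one>\<^bsub>\<Gamma>\<^esub>}. A #>\<^bsub>\<Gamma>\<^esub> r)"
    using subgroup.one_closed[OF assms] by simp_all
qed simp

lemma finite_coset_cover_trans:
  assumes AB: "finite_coset_cover A B" and BC: "finite_coset_cover B C"
    and subgroups: "subgroup A \<Gamma>" "subgroup C \<Gamma>" and "B \<subseteq> A"
  shows "finite_coset_cover A C"
proof -
  obtain R where R: "finite R" "R \<subseteq> A" "A \<subseteq> (\<Union>r\<in>R. B #>\<^bsub>\<Gamma>\<^esub> r)"
    using AB by (auto simp: finite_coset_cover_def)
  obtain R' where R': "finite R'" "R' \<subseteq> B" "B \<subseteq> (\<Union>r\<in>R'. C #>\<^bsub>\<Gamma>\<^esub> r)"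
    using BC by (auto simp: finite_coset_cover_def)
  have A_carrier: "A \<subseteq> carrier \<Gamma>"
    using subgroup.subset[OF subgroups(1)] .
  let ?R = "(\<lambda>(a, b). a \<otimes>\<^bsub>\<Gamma>\<^esub> b) ` (R' \<times> R)"
  have "a \<otimes>\<^bsub>\<Gamma>\<^esub> b \<in> A" if "a \<in> R'" "b \<in> R" for a b
    using that R(2) R'(2) \<open>B \<subseteq> A\<close> subgroup.m_closed[OF subgroups(1)] by blast
  then have "?R \<subseteq> A"
    by auto
  moreover have "finite ?R"
    using R(1) R'(1) by simp
  moreover have "x \<in> (\<Union>r\<in>?R. C #>\<^bsub>\<Gamma>\<^esub> r)" if x: "x \<in> A" for x
  proof -
    obtain r h where r: "r \<in> R" "h \<in> B" "x = h \<otimes>\<^bsub>\<Gamma>\<^esub> r"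
      using R(3) x unfolding r_coset_def by blast
    obtain r' h' where r': "r' \<in> R'" "h' \<in> C" "h = h' \<otimes>\<^bsub>\<Gamma>\<^esub> r'"
      using R'(3) r(2) unfolding r_coset_def by blast
    have "h' \<in> carrier \<Gamma>" "r' \<in> carrier \<Gamma>" "r \<in> carrier \<Gamma>"
      using r r' R(2) R'(2) \<open>B \<subseteq> A\<close> A_carrier subgroup.subset[OF subgroups(2)] by blast+
    then have "x = h' \<otimes>\<^bsub>\<Gamma>\<^esub> (r' \<otimes>\<^bsub>\<Gamma>\<^esub> r)"
      using r r' by (simp add: GL.m_assoc)
    then have "x \<in> C #>\<^bsub>\<Gamma>\<^esub> (r' \<otimes>\<^bsub>\<Gamma>\<^esub> r)"
      using r'(2) unfolding r_coset_def by blast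
    moreover have "r' \<otimes>\<^bsub>\<Gamma>\<^esub> r \<in> ?R"
      using r r' by blast
    ultimately show ?thesis
      by blast
  qed
  ultimately show ?thesis
    unfolding finite_coset_cover_def by (intro exI[of _ ?R]) blast
qed

end

section \<open>The lower p-series\<close>

locale padic_closed_subgroup = padic_GL1 +
  fixes G :: "pmat set"
  assumes closed_G: "closed_subgroup p m G"
begin

abbreviation "Gn \<equiv> pseries p m G"

lemma subgroup_G: "subgroup G \<Gamma>"
  using closed_G by (simp add: closed_subgroup_def)

lemma G_subset: "G \<subseteq> carrier \<Gamma>"
  using closed_G closed_subgroup_subset by blast

definition pstep_gens :: "pmat set \<Rightarrow> pmat set" where
  "pstep_gens H = {x [^]\<^bsub>\<Gamma>\<^esub> p | x. x \<in> H} \<union> {gcomm \<Gamma> x y | x y. x \<in> G \<and> y \<in> H}"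

lemma pstep_eq_topgen: "pstep p m G H = topgen p m (pstep_gens H)"
  by (simp add: pstep_def pstep_gens_def)

lemma pstep_gens_subset_carrier: "H \<subseteq> carrier \<Gamma> \<Longrightarrow> pstep_gens H \<subseteq> carrier \<Gamma>"
  using G_subset by (auto simp: pstep_gens_def intro!: GL.gcomm_closed)

lemma pstep_gens_subset:
  assumes H: "subgroup H \<Gamma>" and conj_H: "\<And>g x. g \<in> G \<Longrightarrow> x \<in> H \<Longrightarrow> g \<otimes>\<^bsub>\<Gamma>\<^esub> x \<otimes>\<^bsub>\<Gamma>\<^esub> inv\<^bsub>\<Gamma>\<^esub> g \<in> H"
  shows "pstep_gens H \<subseteq> H"
proof
  fix z assume "z \<in> pstep_gens H"
  then consider x where "x \<in> H" "z = x [^]\<^bsub>\<Gamma>\<^esub> p"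
    | x y where "x \<in> G" "y \<in> H" "z = gcomm \<Gamma> x y"
    unfolding pstep_gens_def by blast
  then show "z \<in> H"
  proof cases
    case 1
    then show ?thesis
      using GL.subgroup_nat_pow_closed[OF H] by simp
  next
    case 2
    have carrier: "x \<in> carrier \<Gamma>" "y \<in> carrier \<Gamma>"
      using 2 G_subset subgroup.subset[OF H] by auto
    have "inv\<^bsub>\<Gamma>\<^esub> x \<otimes>\<^bsub>\<Gamma>\<^esub> inv\<^bsub>\<Gamma>\<^esub> y \<otimes>\<^bsub>\<Gamma>\<^esub> inv\<^bsub>\<Gamma>\<^esub> (inv\<^bsub>\<Gamma>\<^esub> x) \<in> H"
      using conj_H 2 subgroup.m_inv_closed[OF subgroup_G] subgroup.m_inv_closed[OF H] by blast
    then have "inv\<^bsub>\<Gamma>\<^esub> x \<otimes>\<^bsub>\<Gamma>\<^esub> inv\<^bsub>\<Gamma>\<^esub> y \<otimes>\<^bsub>\<Gamma>\<^esub> x \<otimes>\<^bsub>\<Gamma>\<^esub> y \<in> H"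
      using carrier 2 subgroup.m_closed[OF H] by simp
    then show ?thesis
      using 2 by (simp add: gcomm_def)
  qed
qed

lemma pstep_gens_conj:
  assumes H: "H \<subseteq> carrier \<Gamma>" and conj_H: "\<And>g x. g \<in> G \<Longrightarrow> x \<in> H \<Longrightarrow> g \<otimes>\<^bsub>\<Gamma>\<^esub> x \<otimes>\<^bsub>\<Gamma>\<^esub> inv\<^bsub>\<Gamma>\<^esub> g \<in> H"
    and g: "g \<in> G" and z: "z \<in> pstep_gens H"
  shows "g \<otimes>\<^bsub>\<Gamma>\<^esub> z \<otimes>\<^bsub>\<Gamma>\<^esub> inv\<^bsub>\<Gamma>\<^esub> g \<in> pstep_gens H"
proof -
  have g_carrier: "g \<in> carrier \<Gamma>"
    using g G_subset by blast
  from z consider x where "x \<in> H" "z = x [^]\<^bsub>\<Gamma>\<^esub> p"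
    | x y where "x \<in> G" "y \<in> H" "z = gcomm \<Gamma> x y"
    unfolding pstep_gens_def by blast
  then show ?thesis
  proof cases
    case 1
    then show ?thesis
      using conj_H[OF g] GL.conj_nat_pow[OF g_carrier, of x p] H unfolding pstep_gens_def by auto
  next
    case 2
    have "g \<otimes>\<^bsub>\<Gamma>\<^esub> x \<otimes>\<^bsub>\<Gamma>\<^esub> inv\<^bsub>\<Gamma>\<^esub> g \<in> G"
      using 2 g GL.subgroup_conj_closed[OF subgroup_G] by blast
    then show ?thesis
      using 2 conj_H[OF g] GL.conj_gcomm[OF g_carrier, of x y] H G_subset
      unfolding pstep_gens_def by blast
  qed
qed

lemma pseries_Suc_props:
  "closed_subgroup p m (Gn (Suc j)) \<and> Gn (Suc j) \<subseteq> G \<and>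
   (\<forall>g\<in>G. \<forall>x\<in>Gn (Suc j). g \<otimes>\<^bsub>\<Gamma>\<^esub> x \<otimes>\<^bsub>\<Gamma>\<^esub> inv\<^bsub>\<Gamma>\<^esub> g \<in> Gn (Suc j))"
proof (induction j)
  case 0
  show ?case
    using closed_G subgroup_G by (auto intro: subgroup.m_closed subgroup.m_inv_closed)
next
  case (Suc j)
  let ?H = "Gn (Suc j)"
  have H: "closed_subgroup p m ?H" "?H \<subseteq> carrier \<Gamma>"
    and conj_H: "\<And>g x. g \<in> G \<Longrightarrow> x \<in> ?H \<Longrightarrow> g \<otimes>\<^bsub>\<Gamma>\<^esub> x \<otimes>\<^bsub>\<Gamma>\<^esub> inv\<^bsub>\<Gamma>\<^esub> g \<in> ?H"
    using Suc.IH G_subset by auto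
  have gens: "pstep_gens ?H \<subseteq> carrier \<Gamma>"
    by (rule pstep_gens_subset_carrier[OF H(2)])
  have eq: "Gn (Suc (Suc j)) = topgen p m (pstep_gens ?H)"
    by (simp add: pstep_eq_topgen)
  have "Gn (Suc (Suc j)) \<subseteq> ?H"
    unfolding eq using H conj_H
    by (intro topgen_least pstep_gens_subset) (auto simp: closed_subgroup_def)
  moreover have "closed_subgroup p m (Gn (Suc (Suc j)))"
    unfolding eq by (rule closed_subgroup_topgen[OF gens])
  moreover have "g \<otimes>\<^bsub>\<Gamma>\<^esub> x \<otimes>\<^bsub>\<Gamma>\<^esub> inv\<^bsub>\<Gamma>\<^esub> g \<in> Gn (Suc (Suc j))"
    if g: "g \<in> G" and x: "x \<in> Gn (Suc (Suc j))" for g x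
    unfolding eq
  proof (rule topgen_conj_closed[OF gens _ _ x[unfolded eq]])
    show "g \<in> carrier \<Gamma>"
      using g G_subset by blast
    show "g \<otimes>\<^bsub>\<Gamma>\<^esub> z \<otimes>\<^bsub>\<Gamma>\<^esub> inv\<^bsub>\<Gamma>\<^esub> g \<in> topgen p m (pstep_gens ?H)" if "z \<in> pstep_gens ?H" for z
      using pstep_gens_conj[OF H(2) conj_H g that] subset_topgen by blast
  qed
  ultimately show ?case
    using Suc.IH by blast
qed

lemma pseries_closed_subgroup: "closed_subgroup p m (Gn j)"
  using pseries_Suc_props[of "j - 1"] closed_G by (cases j) auto

lemma pseries_subgroup: "subgroup (Gn j) \<Gamma>"
  using pseries_closed_subgroup by (simp add: closed_subgroup_def)

lemma pseries_subset_G: "Gn j \<subseteq> G"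
  using pseries_Suc_props[of "j - 1"] by (cases j) auto

lemma pseries_subset_carrier: "Gn j \<subseteq> carrier \<Gamma>"
  using pseries_subset_G G_subset by blast

lemma pseries_conj_closed: "g \<in> G \<Longrightarrow> x \<in> Gn j \<Longrightarrow> g \<otimes>\<^bsub>\<Gamma>\<^esub> x \<otimes>\<^bsub>\<Gamma>\<^esub> inv\<^bsub>\<Gamma>\<^esub> g \<in> Gn j"
  using pseries_Suc_props[of "j - 1"] GL.subgroup_conj_closed[OF subgroup_G] by (cases j) auto

lemma pseries_Suc: "1 \<le> j \<Longrightarrow> Gn (Suc j) = topgen p m (pstep_gens (Gn j))"
  by (cases j) (auto simp: pstep_eq_topgen)

lemma pseries_pow_p: "1 \<le> j \<Longrightarrow> x \<in> Gn j \<Longrightarrow> x [^]\<^bsub>\<Gamma>\<^esub> p \<in> Gn (j + 1)"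
  using pseries_Suc[of j] subset_topgen[of "pstep_gens (Gn j)"] by (auto simp: pstep_gens_def)

lemma pseries_gcomm:
  assumes "1 \<le> j" "x \<in> G" "y \<in> Gn j"
  shows "gcomm \<Gamma> x y \<in> Gn (j + 1)"
proof -
  have "gcomm \<Gamma> x y \<in> pstep_gens (Gn j)"
    using assms unfolding pstep_gens_def by blast
  then show ?thesis
    using pseries_Suc[OF assms(1)] subset_topgen by auto
qed

lemma pseries_Suc_subset: "Gn (Suc j) \<subseteq> Gn j"
proof (cases j)
  case (Suc i)
  then have "topgen p m (pstep_gens (Gn j)) \<subseteq> Gn j"
    using pstep_gens_subset[OF pseries_subgroup pseries_conj_closed]
    by (intro topgen_least pseries_closed_subgroup)
  then show ?thesis
    using pseries_Suc[of j] Suc by simp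
qed simp

lemma pseries_antimono: "i \<le> j \<Longrightarrow> Gn j \<subseteq> Gn i"
  by (induction j rule: dec_induct) (use pseries_Suc_subset in auto)

lemma pseries_subset_cong_subgroup: "1 \<le> j \<Longrightarrow> Gn j \<subseteq> cong_subgroup j"
proof (induction j rule: dec_induct)
  case base
  then show ?case
    using G_subset cong_subgroup_1 by simp
next
  case (step j)
  have "pstep_gens (Gn j) \<subseteq> cong_subgroup (Suc j)"
  proof
    fix z assume "z \<in> pstep_gens (Gn j)"
    then consider x where "x \<in> Gn j" "z = x [^]\<^bsub>\<Gamma>\<^esub> p"
      | x y where "x \<in> G" "y \<in> Gn j" "z = gcomm \<Gamma> x y"
      unfolding pstep_gens_def by blast
    then show "z \<in> cong_subgroup (Suc j)"
    proof cases
      case 1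
      then show ?thesis
        using cong_subgroup_pow_p[OF step(1)] step(3) by auto
    next
      case 2
      then show ?thesis
        using gcomm_cong_subgroup[of x y j] G_subset step(3) by auto
    qed
  qed
  then show ?case
    using pseries_Suc[OF step(1)] closed_subgroup_cong_subgroup topgen_least by simp
qed

end

section \<open>Products of powers and elementary abelian quotients\<close>

definition pow_prod :: "('a, 'b) monoid_scheme \<Rightarrow> (nat \<Rightarrow> 'a) \<Rightarrow> (nat \<Rightarrow> nat) \<Rightarrow> nat list \<Rightarrow> 'a" where
  "pow_prod M y c xs = foldr (\<lambda>i acc. y i [^]\<^bsub>M\<^esub> c i \<otimes>\<^bsub>M\<^esub> acc) xs \<one>\<^bsub>M\<^esub>"

lemma pow_prod_Nil [simp]: "pow_prod M y c [] = \<one>\<^bsub>M\<^esub>"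
  by (simp add: pow_prod_def)

lemma pow_prod_Cons [simp]: "pow_prod M y c (a # xs) = y a [^]\<^bsub>M\<^esub> c a \<otimes>\<^bsub>M\<^esub> pow_prod M y c xs"
  by (simp add: pow_prod_def)

lemma pow_prod_cong: "(\<And>i. i \<in> set xs \<Longrightarrow> c i = d i) \<Longrightarrow> pow_prod M y c xs = pow_prod M y d xs"
  by (induction xs) auto

context monoid
begin

lemma pow_prod_closed: "(\<And>i. i \<in> set xs \<Longrightarrow> y i \<in> carrier G) \<Longrightarrow> pow_prod G y c xs \<in> carrier G"
  by (induction xs) auto

lemma pow_prod_zero:
  "(\<And>i. i \<in> set xs \<Longrightarrow> c i = 0) \<Longrightarrow> (\<And>i. i \<in> set xs \<Longrightarrow> y i \<in> carrier G) \<Longrightarrow> pow_prod G y c xs = \<one>"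
  by (induction xs) auto

lemma pow_prod_delta:
  assumes "distinct xs" "i \<in> set xs" "\<And>i. i \<in> set xs \<Longrightarrow> y i \<in> carrier G"
  shows "pow_prod G y (\<lambda>j. if j = i then 1 else 0) xs = y i"
  using assms
proof (induction xs)
  case (Cons a xs)
  show ?case
  proof (cases "a = i")
    case True
    then have "pow_prod G y (\<lambda>j. if j = i then 1 else 0) xs = \<one>"
      using Cons.prems by (intro pow_prod_zero) auto
    then show ?thesis
      using True Cons.prems by simp
  qed (use Cons in \<open>simp add: pow_prod_closed\<close>)
qed simp

end

lemma (in comm_monoid) pow_prod_mult:
  "(\<And>i. i \<in> set xs \<Longrightarrow> y i \<in> carrier G) \<Longrightarrow>
   pow_prod G y c xs \<otimes> pow_prod G y d xs = pow_prod G y (\<lambda>i. c i + d i) xs"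
proof (induction xs)
  case (Cons a xs)
  have "y a \<in> carrier G" "pow_prod G y c xs \<in> carrier G" "pow_prod G y d xs \<in> carrier G"
    using Cons.prems by (auto intro: pow_prod_closed)
  then have "pow_prod G y c (a # xs) \<otimes> pow_prod G y d (a # xs)
      = (y a [^] c a \<otimes> y a [^] d a) \<otimes> (pow_prod G y c xs \<otimes> pow_prod G y d xs)"
    by (simp add: m_ac)
  then show ?case
    using Cons by (simp add: nat_pow_mult)
qed simp

lemma (in group) nat_pow_mod_exponent:
  assumes "y \<in> carrier G" "y [^] (q::nat) = \<one>"
  shows "y [^] (n mod q) = y [^] (n::nat)"
proof -
  have "y [^] (n mod q) \<otimes> (y [^] q) [^] (n div q) = y [^] n"
    using assms(1) by (simp add: nat_pow_pow nat_pow_mult)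
  then show ?thesis
    using assms by simp
qed

lemma (in group) pow_prod_mod_exponent:
  "(\<And>i. i \<in> set xs \<Longrightarrow> y i \<in> carrier G \<and> y i [^] (q::nat) = \<one>) \<Longrightarrow>
   pow_prod G y (\<lambda>i. c i mod q) xs = pow_prod G y c xs"
  by (induction xs) (auto simp: nat_pow_mod_exponent)

lemma r_coset_carrier_update: "H #>\<^bsub>G\<lparr>carrier := K\<rparr>\<^esub> a = H #>\<^bsub>G\<^esub> a"
  by (simp add: r_coset_def)

context group
begin

lemma normal_in_subgroup:
  assumes "subgroup K G" "subgroup H G" "H \<subseteq> K"
    and conj_H: "\<And>x h. x \<in> K \<Longrightarrow> h \<in> H \<Longrightarrow> x \<otimes> h \<otimes> inv x \<in> H"
  shows "H \<lhd> G\<lparr>carrier := K\<rparr>"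
proof -
  have "group (G\<lparr>carrier := K\<rparr>)"
    by (rule subgroup_imp_group[OF assms(1)])
  moreover have "subgroup H (G\<lparr>carrier := K\<rparr>)"
    by (rule subgroup_incl[OF assms(2,1,3)])
  ultimately show ?thesis
    using group.normal_inv_iff conj_H assms(1) by fastforce
qed

lemma comm_group_FactGroup_if_gcomm:
  assumes K: "subgroup K G" and H: "subgroup H G" "H \<subseteq> K"
    and conj_H: "\<And>x h. x \<in> K \<Longrightarrow> h \<in> H \<Longrightarrow> x \<otimes> h \<otimes> inv x \<in> H"
    and gcomm_H: "\<And>x y. x \<in> K \<Longrightarrow> y \<in> K \<Longrightarrow> gcomm G x y \<in> H"
  shows "comm_group (G\<lparr>carrier := K\<rparr> Mod H)"
proof -
  interpret N: normal H "G\<lparr>carrier := K\<rparr>"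
    by (rule normal_in_subgroup[OF K H conj_H])
  show ?thesis
  proof (rule group.group_comm_groupI[OF N.factorgroup_is_group])
    fix A B assume "A \<in> carrier (G\<lparr>carrier := K\<rparr> Mod H)" "B \<in> carrier (G\<lparr>carrier := K\<rparr> Mod H)"
    then obtain x y where xy: "x \<in> K" "y \<in> K" "A = H #> x" "B = H #> y"
      by (auto simp: carrier_FactGroup r_coset_carrier_update)
    have carrier: "x \<in> carrier G" "y \<in> carrier G"
      using xy subgroup.subset[OF K] by auto
    have "gcomm G (inv x) (inv y) = (x \<otimes> y) \<otimes> inv (y \<otimes> x)"
      using carrier by (simp add: gcomm_def inv_mult_group m_assoc)
    then have "x \<otimes> y \<in> H #> (y \<otimes> x)"
      using gcomm_H subgroup.m_inv_closed[OF K] xy subgroup.rcos_module_rev[OF H(1) is_group] carrier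
      by (metis m_closed)
    then have "H #> (y \<otimes> x) = H #> (x \<otimes> y)"
      using repr_independence[OF _ _ H(1)] carrier by simp
    then show "A \<otimes>\<^bsub>G\<lparr>carrier := K\<rparr> Mod H\<^esub> B = B \<otimes>\<^bsub>G\<lparr>carrier := K\<rparr> Mod H\<^esub> A"
      using xy N.rcos_sum by (simp add: r_coset_carrier_update)
  qed
qed

lemma FactGroup_nat_pow_eq_one:
  assumes K: "subgroup K G" and H: "subgroup H G" "H \<subseteq> K"
    and conj_H: "\<And>x h. x \<in> K \<Longrightarrow> h \<in> H \<Longrightarrow> x \<otimes> h \<otimes> inv x \<in> H"
    and pow_H: "\<And>x. x \<in> K \<Longrightarrow> x [^] (q::nat) \<in> H"
    and C: "C \<in> carrier (G\<lparr>carrier := K\<rparr> Mod H)"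
  shows "C [^]\<^bsub>G\<lparr>carrier := K\<rparr> Mod H\<^esub> q = \<one>\<^bsub>G\<lparr>carrier := K\<rparr> Mod H\<^esub>"
proof -
  interpret N: normal H "G\<lparr>carrier := K\<rparr>"
    by (rule normal_in_subgroup[OF K H conj_H])
  obtain x where x: "x \<in> K" "C = H #> x"
    using C by (auto simp: carrier_FactGroup r_coset_carrier_update)
  then have "C [^]\<^bsub>G\<lparr>carrier := K\<rparr> Mod H\<^esub> q = H #> (x [^] q)"
    using N.FactGroup_pow[of x q] by (simp add: r_coset_carrier_update nat_pow_consistent[symmetric])
  also have "\<dots> = H"
    using coset_join2[OF _ H(1) pow_H[OF x(1)]] x subgroup.subset[OF K] by auto
  finally show ?thesis
    by simp
qed

end

locale elementary_quotient = padic_GL1 +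
  fixes g :: "nat \<Rightarrow> pmat" and s :: nat and K H :: "pmat set"
  assumes g_carrier: "g ` {..<s} \<subseteq> carrier \<Gamma>"
    and K_def: "K = topgen p m (g ` {..<s})"
    and closed_H: "closed_subgroup p m H" and H_subset_K: "H \<subseteq> K"
    and conj_H: "\<And>x h. x \<in> K \<Longrightarrow> h \<in> H \<Longrightarrow> x \<otimes>\<^bsub>\<Gamma>\<^esub> h \<otimes>\<^bsub>\<Gamma>\<^esub> inv\<^bsub>\<Gamma>\<^esub> x \<in> H"
    and pow_H: "\<And>x. x \<in> K \<Longrightarrow> x [^]\<^bsub>\<Gamma>\<^esub> p \<in> H"
    and gcomm_H: "\<And>x y. x \<in> K \<Longrightarrow> y \<in> K \<Longrightarrow> gcomm \<Gamma> x y \<in> H"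
begin

abbreviation "Q \<equiv> \<Gamma>\<lparr>carrier := K\<rparr> Mod H"

lemma closed_subgroup_K: "closed_subgroup p m K"
  unfolding K_def by (rule closed_subgroup_topgen[OF g_carrier])

lemma subgroup_K: "subgroup K \<Gamma>"
  using closed_subgroup_K by (simp add: closed_subgroup_def)

lemma subgroup_H: "subgroup H \<Gamma>"
  using closed_H by (simp add: closed_subgroup_def)

lemma K_subset: "K \<subseteq> carrier \<Gamma>"
  using subgroup.subset[OF subgroup_K] .

lemma g_in_K: "i < s \<Longrightarrow> g i \<in> K"
  using subset_topgen[of "g ` {..<s}"] K_def by auto

sublocale N: normal H "\<Gamma>\<lparr>carrier := K\<rparr>"
  by (rule GL.normal_in_subgroup[OF subgroup_K subgroup_H H_subset_K conj_H])

sublocale Q: comm_group Q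
  by (rule GL.comm_group_FactGroup_if_gcomm[OF subgroup_K subgroup_H H_subset_K conj_H gcomm_H])

lemma coset_in_Q: "x \<in> K \<Longrightarrow> H #>\<^bsub>\<Gamma>\<^esub> x \<in> carrier Q"
  unfolding carrier_FactGroup by (rule image_eqI[of _ _ x]) (simp_all add: r_coset_carrier_update)

lemma coset_mult: "x \<in> K \<Longrightarrow> y \<in> K \<Longrightarrow> H #>\<^bsub>\<Gamma>\<^esub> (x \<otimes>\<^bsub>\<Gamma>\<^esub> y) = (H #>\<^bsub>\<Gamma>\<^esub> x) \<otimes>\<^bsub>Q\<^esub> (H #>\<^bsub>\<Gamma>\<^esub> y)"
  using N.rcos_sum[of x y] by (simp add: r_coset_carrier_update)

lemma coset_one: "H #>\<^bsub>\<Gamma>\<^esub> \<one>\<^bsub>\<Gamma>\<^esub> = \<one>\<^bsub>Q\<^esub>"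
  using GL.coset_join2[OF GL.one_closed subgroup_H subgroup.one_closed[OF subgroup_H]] by simp

lemma coset_inv:
  assumes x: "x \<in> K"
  shows "H #>\<^bsub>\<Gamma>\<^esub> (inv\<^bsub>\<Gamma>\<^esub> x) = inv\<^bsub>Q\<^esub> (H #>\<^bsub>\<Gamma>\<^esub> x)"
proof -
  have inv_x: "inv\<^bsub>\<Gamma>\<^esub> x \<in> K"
    by (rule subgroup.m_inv_closed[OF subgroup_K x])
  have "(H #>\<^bsub>\<Gamma>\<^esub> (inv\<^bsub>\<Gamma>\<^esub> x)) \<otimes>\<^bsub>Q\<^esub> (H #>\<^bsub>\<Gamma>\<^esub> x) = H #>\<^bsub>\<Gamma>\<^esub> \<one>\<^bsub>\<Gamma>\<^esub>"
    using coset_mult[OF inv_x x] x K_subset by auto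
  then show ?thesis
    unfolding coset_one by (rule Q.inv_equality[OF _ coset_in_Q[OF x] coset_in_Q[OF inv_x], symmetric])
qed

lemma coset_nat_pow: "x \<in> K \<Longrightarrow> H #>\<^bsub>\<Gamma>\<^esub> (x [^]\<^bsub>\<Gamma>\<^esub> (n::nat)) = (H #>\<^bsub>\<Gamma>\<^esub> x) [^]\<^bsub>Q\<^esub> n"
  using N.FactGroup_pow[of x n] by (simp add: r_coset_carrier_update GL.nat_pow_consistent[symmetric])

lemma coset_g_pow_p: "i < s \<Longrightarrow> (H #>\<^bsub>\<Gamma>\<^esub> g i) [^]\<^bsub>Q\<^esub> p = \<one>\<^bsub>Q\<^esub>"
  using GL.FactGroup_nat_pow_eq_one[OF subgroup_K subgroup_H H_subset_K conj_H pow_H coset_in_Q]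
    g_in_K by simp

definition exps :: "(nat \<Rightarrow> nat) set" where
  "exps = PiE {..<s} (\<lambda>_. {..<p})"

abbreviation "gprod c \<equiv> pow_prod \<Gamma> g c [0..<s]"
abbreviation "qprod c \<equiv> pow_prod Q (\<lambda>i. H #>\<^bsub>\<Gamma>\<^esub> g i) c [0..<s]"

lemma finite_exps: "finite exps"
  by (simp add: exps_def finite_PiE)

lemma card_exps: "card exps = p ^ s"
  by (simp add: exps_def card_PiE)

lemma restrict_mod_in_exps: "restrict (\<lambda>i. f i mod p) {..<s} \<in> exps"
  using two_le_p by (auto simp: exps_def)

lemma pow_prod_in_K: "set xs \<subseteq> {..<s} \<Longrightarrow> pow_prod \<Gamma> g c xs \<in> K"
proof (induction xs)
  case Nil
  then show ?case
    using subgroup.one_closed[OF subgroup_K] by simp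
next
  case (Cons a xs)
  then show ?case
    using subgroup.m_closed[OF subgroup_K] GL.subgroup_nat_pow_closed[OF subgroup_K] g_in_K by simp
qed

lemma coset_pow_prod:
  "set xs \<subseteq> {..<s} \<Longrightarrow> H #>\<^bsub>\<Gamma>\<^esub> pow_prod \<Gamma> g c xs = pow_prod Q (\<lambda>i. H #>\<^bsub>\<Gamma>\<^esub> g i) c xs"
proof (induction xs)
  case Nil
  then show ?case
    using coset_one by simp
next
  case (Cons a xs)
  have "a < s" "set xs \<subseteq> {..<s}"
    using Cons.prems by auto
  then show ?case
    using Cons.IH g_in_K pow_prod_in_K coset_nat_pow
      coset_mult[OF GL.subgroup_nat_pow_closed[OF subgroup_K g_in_K]] by simp
qed

lemma gprod_in_K: "gprod c \<in> K"
  by (rule pow_prod_in_K) auto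

lemma coset_gprod: "H #>\<^bsub>\<Gamma>\<^esub> gprod c = qprod c"
  by (rule coset_pow_prod) auto

lemma qprod_mult_mod: "qprod c \<otimes>\<^bsub>Q\<^esub> qprod d = qprod (restrict (\<lambda>i. (c i + d i) mod p) {..<s})"
proof -
  have "qprod c \<otimes>\<^bsub>Q\<^esub> qprod d = pow_prod Q (\<lambda>i. H #>\<^bsub>\<Gamma>\<^esub> g i) (\<lambda>i. c i + d i) [0..<s]"
    by (rule Q.pow_prod_mult) (use coset_in_Q g_in_K in auto)
  also have "\<dots> = pow_prod Q (\<lambda>i. H #>\<^bsub>\<Gamma>\<^esub> g i) (\<lambda>i. (c i + d i) mod p) [0..<s]"
    by (rule Q.pow_prod_mod_exponent[symmetric]) (use coset_in_Q g_in_K coset_g_pow_p in auto)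
  also have "\<dots> = qprod (restrict (\<lambda>i. (c i + d i) mod p) {..<s})"
    by (rule pow_prod_cong) auto
  finally show ?thesis .
qed

lemma qprod_closed: "qprod c \<in> carrier Q"
  using coset_in_Q g_in_K by (intro Q.pow_prod_closed) simp

lemma qprod_zero: "qprod (\<lambda>_. 0) = \<one>\<^bsub>Q\<^esub>"
  using coset_in_Q g_in_K by (intro Q.pow_prod_zero) auto

lemma qprod_mult_eq_one:
  assumes "\<And>i. i < s \<Longrightarrow> (c i + d i) mod p = 0"
  shows "qprod c \<otimes>\<^bsub>Q\<^esub> qprod d = \<one>\<^bsub>Q\<^esub>"
proof -
  have "qprod (restrict (\<lambda>i. (c i + d i) mod p) {..<s}) = qprod (\<lambda>_. 0)"
    using assms by (intro pow_prod_cong) auto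
  then show ?thesis
    unfolding qprod_mult_mod qprod_zero .
qed

definition reduced_span :: "pmat set" where
  "reduced_span = {x \<in> K. \<exists>c\<in>exps. H #>\<^bsub>\<Gamma>\<^esub> x = qprod c}"

lemma reduced_span_eq_UN: "reduced_span = (\<Union>c\<in>exps. H #>\<^bsub>\<Gamma>\<^esub> gprod c)"
proof (intro equalityI subsetI)
  fix x assume "x \<in> reduced_span"
  then obtain c where c: "x \<in> K" "c \<in> exps" "H #>\<^bsub>\<Gamma>\<^esub> x = qprod c"
    by (auto simp: reduced_span_def)
  then have "x \<in> H #>\<^bsub>\<Gamma>\<^esub> x"
    using GL.rcos_self[OF _ subgroup_H] K_subset by blast
  then show "x \<in> (\<Union>c\<in>exps. H #>\<^bsub>\<Gamma>\<^esub> gprod c)"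
    using c coset_gprod by auto
next
  fix x assume "x \<in> (\<Union>c\<in>exps. H #>\<^bsub>\<Gamma>\<^esub> gprod c)"
  then obtain c where c: "c \<in> exps" "x \<in> H #>\<^bsub>\<Gamma>\<^esub> gprod c"
    by blast
  have "H #>\<^bsub>\<Gamma>\<^esub> gprod c = H #>\<^bsub>\<Gamma>\<^esub> x"
    using GL.repr_independence[OF c(2) _ subgroup_H] gprod_in_K K_subset by blast
  moreover have "x \<in> K"
    using c(2) H_subset_K gprod_in_K subgroup.m_closed[OF subgroup_K] unfolding r_coset_def by blast
  ultimately show "x \<in> reduced_span"
    using c coset_gprod by (auto simp: reduced_span_def)
qed

lemma pclosed_reduced_span: "pclosed p m reduced_span"
  unfolding reduced_span_eq_UN using closed_H gprod_in_K K_subset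
  by (intro pclosed_finite_UN[OF finite_exps] pclosed_r_coset) (auto simp: closed_subgroup_def)

lemma qprod_inv:
  assumes "c \<in> exps"
  shows "inv\<^bsub>Q\<^esub> (qprod c) = qprod (restrict (\<lambda>i. (p - c i) mod p) {..<s})"
proof -
  have "(c i + restrict (\<lambda>i. (p - c i) mod p) {..<s} i) mod p = 0" if "i < s" for i
  proof -
    have "c i < p"
      using assms that by (auto simp: exps_def)
    then show ?thesis
      using that by (cases "c i = 0") simp_all
  qed
  then have "qprod c \<otimes>\<^bsub>Q\<^esub> qprod (restrict (\<lambda>i. (p - c i) mod p) {..<s}) = \<one>\<^bsub>Q\<^esub>"
    by (rule qprod_mult_eq_one)
  then have "qprod (restrict (\<lambda>i. (p - c i) mod p) {..<s}) \<otimes>\<^bsub>Q\<^esub> qprod c = \<one>\<^bsub>Q\<^esub>"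
    using Q.m_comm[OF qprod_closed qprod_closed] by simp
  then show ?thesis
    by (rule Q.inv_equality[OF _ qprod_closed qprod_closed])
qed

lemma subgroup_reduced_span: "subgroup reduced_span \<Gamma>"
proof (rule GL.subgroupI)
  show "reduced_span \<subseteq> carrier \<Gamma>"
    using K_subset by (auto simp: reduced_span_def)
  have "H #>\<^bsub>\<Gamma>\<^esub> \<one>\<^bsub>\<Gamma>\<^esub> = qprod (restrict (\<lambda>i. 0 mod p) {..<s})"
    unfolding coset_one qprod_zero[symmetric] by (intro pow_prod_cong) auto
  then have "\<one>\<^bsub>\<Gamma>\<^esub> \<in> reduced_span"
    using restrict_mod_in_exps[of "\<lambda>_. 0"] subgroup.one_closed[OF subgroup_K]
    unfolding reduced_span_def by blast
  then show "reduced_span \<noteq> {}"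
    by blast
next
  fix x assume "x \<in> reduced_span"
  then obtain c where c: "x \<in> K" "c \<in> exps" "H #>\<^bsub>\<Gamma>\<^esub> x = qprod c"
    by (auto simp: reduced_span_def)
  then have "H #>\<^bsub>\<Gamma>\<^esub> inv\<^bsub>\<Gamma>\<^esub> x = qprod (restrict (\<lambda>i. (p - c i) mod p) {..<s})"
    by (simp only: coset_inv qprod_inv)
  then show "inv\<^bsub>\<Gamma>\<^esub> x \<in> reduced_span"
    using c(1) restrict_mod_in_exps[of "\<lambda>i. p - c i"] subgroup.m_inv_closed[OF subgroup_K]
    unfolding reduced_span_def by blast
next
  fix x y assume "x \<in> reduced_span" "y \<in> reduced_span"
  then obtain c d where x: "x \<in> K" "H #>\<^bsub>\<Gamma>\<^esub> x = qprod c"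
    and y: "y \<in> K" "H #>\<^bsub>\<Gamma>\<^esub> y = qprod d"
    by (auto simp: reduced_span_def)
  then have "H #>\<^bsub>\<Gamma>\<^esub> (x \<otimes>\<^bsub>\<Gamma>\<^esub> y) = qprod (restrict (\<lambda>i. (c i + d i) mod p) {..<s})"
    by (simp only: coset_mult qprod_mult_mod)
  then show "x \<otimes>\<^bsub>\<Gamma>\<^esub> y \<in> reduced_span"
    using x(1) y(1) restrict_mod_in_exps[of "\<lambda>i. c i + d i"] subgroup.m_closed[OF subgroup_K]
    unfolding reduced_span_def by blast
qed

lemma g_in_reduced_span: "i < s \<Longrightarrow> g i \<in> reduced_span"
proof -
  assume i: "i < s"
  let ?c = "restrict (\<lambda>j. (if j = i then 1 else 0) mod p) {..<s}"
  have "qprod ?c = pow_prod Q (\<lambda>i. H #>\<^bsub>\<Gamma>\<^esub> g i) (\<lambda>j. if j = i then 1 else 0) [0..<s]"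
    using two_le_p by (intro pow_prod_cong) auto
  also have "\<dots> = H #>\<^bsub>\<Gamma>\<^esub> g i"
    by (rule Q.pow_prod_delta) (use i coset_in_Q g_in_K in auto)
  finally show ?thesis
    using i g_in_K restrict_mod_in_exps[of "\<lambda>j. if j = i then 1 else 0"]
    unfolding reduced_span_def by blast
qed

lemma mem_coset_gprod:
  assumes "x \<in> K"
  shows "\<exists>c\<in>exps. x \<in> H #>\<^bsub>\<Gamma>\<^esub> gprod c"
proof -
  have "closed_subgroup p m reduced_span"
    using subgroup_reduced_span pclosed_reduced_span by (simp add: closed_subgroup_def)
  then have "topgen p m (g ` {..<s}) \<subseteq> reduced_span"
    using g_in_reduced_span by (intro topgen_least) auto
  then have "K \<subseteq> reduced_span"
    by (simp only: K_def)
  then show ?thesis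
    using assms unfolding reduced_span_eq_UN by blast
qed

lemma gprod_diff_in_H:
  assumes c: "c \<in> exps" and d: "d \<in> exps" and eq: "H #>\<^bsub>\<Gamma>\<^esub> gprod c = H #>\<^bsub>\<Gamma>\<^esub> gprod d"
  shows "gprod (restrict (\<lambda>i. (c i + (p - d i)) mod p) {..<s}) \<in> H"
proof -
  define e where "e = restrict (\<lambda>i. (c i + (p - d i)) mod p) {..<s}"
  have "(d i + e i) mod p = c i" if "i < s" for i
  proof -
    have "c i < p" "d i < p"
      using c d that by (auto simp: exps_def)
    then have "(d i + (c i + (p - d i))) mod p = c i"
      by simp
    then show ?thesis
      using that by (simp add: e_def mod_add_right_eq)
  qed
  then have "qprod d \<otimes>\<^bsub>Q\<^esub> qprod e = qprod c"
    unfolding qprod_mult_mod by (intro pow_prod_cong) auto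
  also have "\<dots> = qprod d"
    using eq coset_gprod by simp
  finally have "qprod e = \<one>\<^bsub>Q\<^esub>"
    using Q.l_cancel_one[OF qprod_closed qprod_closed] by blast
  then have "H #>\<^bsub>\<Gamma>\<^esub> gprod e = H"
    by (simp only: coset_gprod one_FactGroup)
  moreover have "gprod e \<in> H #>\<^bsub>\<Gamma>\<^esub> gprod e"
    using GL.rcos_self[OF _ subgroup_H] gprod_in_K K_subset by blast
  ultimately show ?thesis
    by (simp add: e_def)
qed

end

section \<open>Open subgroups of a uniform group\<close>

locale padic_uniform = padic_closed_subgroup +
  assumes uniform_G: "uniform p m G"
begin

lemma pseries_pow_p_diff:
  assumes "1 \<le> j" "x \<in> Gn j" "y \<in> Gn j" "x \<otimes>\<^bsub>\<Gamma>\<^esub> inv\<^bsub>\<Gamma>\<^esub> y \<in> Gn (j + 1)"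
  shows "x [^]\<^bsub>\<Gamma>\<^esub> p \<otimes>\<^bsub>\<Gamma>\<^esub> inv\<^bsub>\<Gamma>\<^esub> (y [^]\<^bsub>\<Gamma>\<^esub> p) \<in> Gn (j + 2)"
proof -
  have "\<forall>x\<in>Gn j. \<forall>y\<in>Gn j. x \<otimes>\<^bsub>\<Gamma>\<^esub> inv\<^bsub>\<Gamma>\<^esub> y \<in> Gn (j + 1) \<longrightarrow>
      x [^]\<^bsub>\<Gamma>\<^esub> p \<otimes>\<^bsub>\<Gamma>\<^esub> inv\<^bsub>\<Gamma>\<^esub> (y [^]\<^bsub>\<Gamma>\<^esub> p) \<in> Gn (j + 2)"
    using uniform_G assms(1) unfolding uniform_def Let_def by (elim conjE allE impE) simp_all
  then show ?thesis
    using assms(2-4) by blast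
qed

lemma pseries_pow_p_surj:
  assumes "1 \<le> j" "y \<in> Gn (j + 1)"
  shows "\<exists>x\<in>Gn j. y \<otimes>\<^bsub>\<Gamma>\<^esub> inv\<^bsub>\<Gamma>\<^esub> (x [^]\<^bsub>\<Gamma>\<^esub> p) \<in> Gn (j + 2)"
proof -
  have "\<forall>y\<in>Gn (j + 1). \<exists>x\<in>Gn j. y \<otimes>\<^bsub>\<Gamma>\<^esub> inv\<^bsub>\<Gamma>\<^esub> (x [^]\<^bsub>\<Gamma>\<^esub> p) \<in> Gn (j + 2)"
    using uniform_G assms(1) unfolding uniform_def Let_def by (elim conjE allE impE) simp_all
  then show ?thesis
    using assms(2) by blast
qed

text \<open>G/G_2 is elementary abelian and generated by the images of finitely many topological
  generators, hence finite.\<close>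

lemma finite_coset_cover_G_2: "finite_coset_cover (Gn 1) (Gn 2)"
proof -
  obtain S where S: "finite S" "S \<subseteq> G" "topgen p m S = G"
    using uniform_G unfolding uniform_def topfin_gen_def by blast
  obtain n :: nat and f where S_eq: "S = f ` {..<n}"
    using finite_imp_nat_seg_image_inj_on[OF S(1)] lessThan_def by metis
  interpret Q: elementary_quotient p m f n G "Gn 2"
  proof
    show "f ` {..<n} \<subseteq> carrier \<Gamma>" "G = topgen p m (f ` {..<n})"
      using S S_eq G_subset by auto
    show "closed_subgroup p m (Gn 2)" "Gn 2 \<subseteq> G"
      by (rule pseries_closed_subgroup, rule pseries_subset_G)
    show "\<And>x h. x \<in> G \<Longrightarrow> h \<in> Gn 2 \<Longrightarrow> x \<otimes>\<^bsub>\<Gamma>\<^esub> h \<otimes>\<^bsub>\<Gamma>\<^esub> inv\<^bsub>\<Gamma>\<^esub> x \<in> Gn 2"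
      by (rule pseries_conj_closed)
    show "x [^]\<^bsub>\<Gamma>\<^esub> p \<in> Gn 2" if "x \<in> G" for x
      using pseries_pow_p[of 1 x] that by (simp add: numeral_2_eq_2)
    show "gcomm \<Gamma> x y \<in> Gn 2" if "x \<in> G" "y \<in> G" for x y
      using pseries_gcomm[of 1 x y] that by (simp add: numeral_2_eq_2)
  qed
  have "finite ((\<lambda>c. Q.gprod c) ` Q.exps)" "(\<lambda>c. Q.gprod c) ` Q.exps \<subseteq> G"
    using Q.finite_exps Q.gprod_in_K by auto
  moreover have "G \<subseteq> (\<Union>r\<in>(\<lambda>c. Q.gprod c) ` Q.exps. Gn 2 #>\<^bsub>\<Gamma>\<^esub> r)"
    using Q.mem_coset_gprod by blast
  ultimately show ?thesis
    unfolding finite_coset_cover_def by (intro exI[of _ "(\<lambda>c. Q.gprod c) ` Q.exps"]) simp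
qed

lemma finite_coset_cover_pseries_step:
  assumes j: "1 \<le> j" and cover: "finite_coset_cover (Gn j) (Gn (j + 1))"
  shows "finite_coset_cover (Gn (j + 1)) (Gn (j + 2))"
proof -
  obtain R where R: "finite R" "R \<subseteq> Gn j" "Gn j \<subseteq> (\<Union>r\<in>R. Gn (j + 1) #>\<^bsub>\<Gamma>\<^esub> r)"
    using cover by (auto simp: finite_coset_cover_def)
  let ?R = "(\<lambda>r. r [^]\<^bsub>\<Gamma>\<^esub> p) ` R"
  have "y \<in> (\<Union>r\<in>?R. Gn (j + 2) #>\<^bsub>\<Gamma>\<^esub> r)" if y: "y \<in> Gn (j + 1)" for y
  proof -
    obtain x where x: "x \<in> Gn j" "y \<otimes>\<^bsub>\<Gamma>\<^esub> inv\<^bsub>\<Gamma>\<^esub> (x [^]\<^bsub>\<Gamma>\<^esub> p) \<in> Gn (j + 2)"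
      using pseries_pow_p_surj[OF j y] by blast
    obtain r where r: "r \<in> R" "x \<in> Gn (j + 1) #>\<^bsub>\<Gamma>\<^esub> r"
      using R x by blast
    have carrier: "r \<in> carrier \<Gamma>" "x \<in> carrier \<Gamma>" "y \<in> carrier \<Gamma>"
      using r R x y pseries_subset_carrier by auto
    have "x \<otimes>\<^bsub>\<Gamma>\<^esub> inv\<^bsub>\<Gamma>\<^esub> r \<in> Gn (j + 1)"
      by (rule subgroup.rcos_module_imp[OF pseries_subgroup GL.is_group carrier(1) r(2)])
    then have "x [^]\<^bsub>\<Gamma>\<^esub> p \<otimes>\<^bsub>\<Gamma>\<^esub> inv\<^bsub>\<Gamma>\<^esub> (r [^]\<^bsub>\<Gamma>\<^esub> p) \<in> Gn (j + 2)"
      using pseries_pow_p_diff[OF j x(1)] r R by blast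
    moreover have "y \<otimes>\<^bsub>\<Gamma>\<^esub> inv\<^bsub>\<Gamma>\<^esub> (r [^]\<^bsub>\<Gamma>\<^esub> p)
        = (y \<otimes>\<^bsub>\<Gamma>\<^esub> inv\<^bsub>\<Gamma>\<^esub> (x [^]\<^bsub>\<Gamma>\<^esub> p)) \<otimes>\<^bsub>\<Gamma>\<^esub> (x [^]\<^bsub>\<Gamma>\<^esub> p \<otimes>\<^bsub>\<Gamma>\<^esub> inv\<^bsub>\<Gamma>\<^esub> (r [^]\<^bsub>\<Gamma>\<^esub> p))"
      using carrier by (simp add: GL.m_assoc)
    ultimately have "y \<otimes>\<^bsub>\<Gamma>\<^esub> inv\<^bsub>\<Gamma>\<^esub> (r [^]\<^bsub>\<Gamma>\<^esub> p) \<in> Gn (j + 2)"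
      using subgroup.m_closed[OF pseries_subgroup x(2)] by simp
    then have "y \<in> Gn (j + 2) #>\<^bsub>\<Gamma>\<^esub> (r [^]\<^bsub>\<Gamma>\<^esub> p)"
      by (rule subgroup.rcos_module_rev[OF pseries_subgroup GL.is_group GL.nat_pow_closed[OF carrier(1)] carrier(3)])
    then show ?thesis
      using r by blast
  qed
  moreover have "?R \<subseteq> Gn (j + 1)"
    using R pseries_pow_p[OF j] by auto
  moreover have "finite ?R"
    using R(1) by simp
  ultimately show ?thesis
    unfolding finite_coset_cover_def by (intro exI[of _ ?R]) blast
qed

lemma finite_coset_cover_pseries_Suc: "1 \<le> j \<Longrightarrow> finite_coset_cover (Gn j) (Gn (j + 1))"
proof (induction j rule: dec_induct)
  case base
  then show ?case
    using finite_coset_cover_G_2 by (simp add: numeral_2_eq_2)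
next
  case (step j)
  then show ?case
    using finite_coset_cover_pseries_step[of j] by simp
qed

lemma finite_coset_cover_pseries: "1 \<le> j \<Longrightarrow> finite_coset_cover G (Gn j)"
proof (induction j rule: dec_induct)
  case base
  then show ?case
    using finite_coset_cover_refl[OF subgroup_G] by simp
next
  case (step j)
  then show ?case
    using finite_coset_cover_trans[OF _ finite_coset_cover_pseries_Suc subgroup_G pseries_subgroup]
      pseries_subset_G by simp
qed

text \<open>A subgroup of finite index is open, since its complement is a finite union of closed cosets.\<close>

lemma pseries_open:
  assumes j: "1 \<le> j" and A: "A \<in> Gn j"
  shows "\<exists>N. \<forall>B\<in>G. B N = A N \<longrightarrow> B \<in> Gn j"
proof -
  obtain R where R: "finite R" "R \<subseteq> G" "G \<subseteq> (\<Union>r\<in>R. Gn j #>\<^bsub>\<Gamma>\<^esub> r)"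
    using finite_coset_cover_pseries[OF j] by (auto simp: finite_coset_cover_def)
  have A_carrier: "A \<in> carrier \<Gamma>"
    using A pseries_subset_carrier by blast
  let ?R0 = "{r \<in> R. A \<notin> Gn j #>\<^bsub>\<Gamma>\<^esub> r}"
  have "pclosed p m (Gn j #>\<^bsub>\<Gamma>\<^esub> r)" if "r \<in> R" for r
    using pseries_closed_subgroup that R(2) G_subset
    by (intro pclosed_r_coset) (auto simp: closed_subgroup_def)
  then have "\<exists>N. \<forall>r\<in>?R0. \<forall>B\<in>Gn j #>\<^bsub>\<Gamma>\<^esub> r. B N \<noteq> A N"
    using R(1) A_carrier by (intro pclosed_avoid_level) auto
  then obtain N where N: "\<forall>r\<in>?R0. \<forall>B\<in>Gn j #>\<^bsub>\<Gamma>\<^esub> r. B N \<noteq> A N"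
    by blast
  have "B \<in> Gn j" if B: "B \<in> G" "B N = A N" for B
  proof -
    obtain r where r: "r \<in> R" "B \<in> Gn j #>\<^bsub>\<Gamma>\<^esub> r"
      using R B by blast
    then have "A \<in> Gn j #>\<^bsub>\<Gamma>\<^esub> r"
      using N B(2) by auto
    then have "Gn j #>\<^bsub>\<Gamma>\<^esub> r = Gn j #>\<^bsub>\<Gamma>\<^esub> A"
      using GL.repr_independence[OF _ _ pseries_subgroup] r R(2) G_subset by blast
    also have "\<dots> = Gn j"
      by (rule GL.coset_join2[OF A_carrier pseries_subgroup A])
    finally show ?thesis
      using r by simp
  qed
  then show ?thesis
    by blast
qed

lemma pseries_Inter_eq_one:
  assumes "\<And>N. 1 \<le> N \<Longrightarrow> A \<in> Gn N"
  shows "A = \<one>\<^bsub>\<Gamma>\<^esub>"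
proof -
  have "A N = pmat_one p m N" for N
  proof -
    have "A \<in> cong_subgroup (N + 1)"
      using assms[of "N + 1"] pseries_subset_cong_subgroup[of "N + 1"] by auto
    then have "A \<in> cong_subgroup N"
      using cong_subgroup_antimono[of N "N + 1"] by auto
    then show ?thesis
      by (simp add: cong_subgroup_def)
  qed
  then show ?thesis
    by (simp add: fun_eq_iff GL1_one)
qed

end

section \<open>The subgroup generated by independent elements\<close>

lemma eq_if_add_diff_mod_eq_0:
  fixes c d p :: nat
  assumes "c < p" "d < p" "(c + (p - d)) mod p = 0"
  shows "c = d"
proof -
  obtain q where q: "c + (p - d) = p * q"
    using assms(3) by (auto simp: mod_eq_0_iff_dvd dvd_def)
  have "p * q < p * 2" "0 < p * q"
    using q assms(1,2) by linarith+
  then have "q = 1"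
    by simp
  then show ?thesis
    using q assms(1,2) by simp
qed

locale lin_indep_generators = padic_uniform +
  fixes k :: nat and g :: "nat \<Rightarrow> pmat" and s :: nat
  assumes one_le_k: "1 \<le> k" and g_in_pseries: "\<forall>i<s. g i \<in> Gn k"
    and lin_indep: "lin_indep_mod p m G k g s"
begin

abbreviation "G' \<equiv> topgen p m (g ` {..<s})"
abbreviation "Phi \<equiv> pstep p m G' G'"

definition Phi_gens :: "pmat set" where
  "Phi_gens = {x [^]\<^bsub>\<Gamma>\<^esub> p | x. x \<in> G'} \<union> {gcomm \<Gamma> x y | x y. x \<in> G' \<and> y \<in> G'}"

lemma Phi_eq_topgen: "Phi = topgen p m Phi_gens"
  by (simp add: pstep_def Phi_gens_def)

lemma g_subset_pseries: "g ` {..<s} \<subseteq> Gn k"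
  using g_in_pseries by auto

lemma g_subset_carrier: "g ` {..<s} \<subseteq> carrier \<Gamma>"
  using g_subset_pseries pseries_subset_carrier by blast

lemma closed_subgroup_G': "closed_subgroup p m G'"
  by (rule closed_subgroup_topgen[OF g_subset_carrier])

lemma subgroup_G': "subgroup G' \<Gamma>"
  using closed_subgroup_G' by (simp add: closed_subgroup_def)

lemma G'_subset_pseries: "G' \<subseteq> Gn k"
  by (rule topgen_least[OF pseries_closed_subgroup g_subset_pseries])

lemma G'_subset_G: "G' \<subseteq> G"
  using G'_subset_pseries pseries_subset_G by blast

lemma G'_subset_carrier: "G' \<subseteq> carrier \<Gamma>"
  using G'_subset_G G_subset by blast

lemma Phi_gens_subset_G': "Phi_gens \<subseteq> G'"
  unfolding Phi_gens_def using GL.subgroup_nat_pow_closed[OF subgroup_G'] GL.subgroup_gcomm_closed[OF subgroup_G']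
  by blast

lemma closed_subgroup_Phi: "closed_subgroup p m Phi"
  unfolding Phi_eq_topgen using Phi_gens_subset_G' G'_subset_carrier
  by (intro closed_subgroup_topgen) blast

lemma Phi_subset_G': "Phi \<subseteq> G'"
  unfolding Phi_eq_topgen by (rule topgen_least[OF closed_subgroup_G' Phi_gens_subset_G'])

lemma Phi_conj_closed:
  assumes x: "x \<in> G'" and h: "h \<in> Phi"
  shows "x \<otimes>\<^bsub>\<Gamma>\<^esub> h \<otimes>\<^bsub>\<Gamma>\<^esub> inv\<^bsub>\<Gamma>\<^esub> x \<in> Phi"
  unfolding Phi_eq_topgen
proof (rule topgen_conj_closed[OF _ _ _ h[unfolded Phi_eq_topgen]])
  show "Phi_gens \<subseteq> carrier \<Gamma>"
    using Phi_gens_subset_G' G'_subset_carrier by blast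
  show x_carrier: "x \<in> carrier \<Gamma>"
    using x G'_subset_carrier by blast
  fix z assume "z \<in> Phi_gens"
  then consider y where "y \<in> G'" "z = y [^]\<^bsub>\<Gamma>\<^esub> p"
    | y w where "y \<in> G'" "w \<in> G'" "z = gcomm \<Gamma> y w"
    unfolding Phi_gens_def by blast
  then have "x \<otimes>\<^bsub>\<Gamma>\<^esub> z \<otimes>\<^bsub>\<Gamma>\<^esub> inv\<^bsub>\<Gamma>\<^esub> x \<in> Phi_gens"
  proof cases
    case 1
    then have "x \<otimes>\<^bsub>\<Gamma>\<^esub> z \<otimes>\<^bsub>\<Gamma>\<^esub> inv\<^bsub>\<Gamma>\<^esub> x = (x \<otimes>\<^bsub>\<Gamma>\<^esub> y \<otimes>\<^bsub>\<Gamma>\<^esub> inv\<^bsub>\<Gamma>\<^esub> x) [^]\<^bsub>\<Gamma>\<^esub> p"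
      using GL.conj_nat_pow[OF x_carrier, of y p] G'_subset_carrier by auto
    then show ?thesis
      using GL.subgroup_conj_closed[OF subgroup_G' x 1(1)] unfolding Phi_gens_def by blast
  next
    case 2
    then have "x \<otimes>\<^bsub>\<Gamma>\<^esub> z \<otimes>\<^bsub>\<Gamma>\<^esub> inv\<^bsub>\<Gamma>\<^esub> x
        = gcomm \<Gamma> (x \<otimes>\<^bsub>\<Gamma>\<^esub> y \<otimes>\<^bsub>\<Gamma>\<^esub> inv\<^bsub>\<Gamma>\<^esub> x) (x \<otimes>\<^bsub>\<Gamma>\<^esub> w \<otimes>\<^bsub>\<Gamma>\<^esub> inv\<^bsub>\<Gamma>\<^esub> x)"
      using GL.conj_gcomm[OF x_carrier, of y w] G'_subset_carrier by auto
    then show ?thesis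
      using GL.subgroup_conj_closed[OF subgroup_G' x 2(1)] GL.subgroup_conj_closed[OF subgroup_G' x 2(2)]
      unfolding Phi_gens_def by blast
  qed
  then show "x \<otimes>\<^bsub>\<Gamma>\<^esub> z \<otimes>\<^bsub>\<Gamma>\<^esub> inv\<^bsub>\<Gamma>\<^esub> x \<in> topgen p m Phi_gens"
    using subset_topgen by blast
qed

lemma Phi_subset_pseries_Suc: "Phi \<subseteq> Gn (k + 1)"
  unfolding Phi_eq_topgen
proof (rule topgen_least[OF pseries_closed_subgroup], rule subsetI)
  fix z assume "z \<in> Phi_gens"
  then consider y where "y \<in> G'" "z = y [^]\<^bsub>\<Gamma>\<^esub> p"
    | y w where "y \<in> G'" "w \<in> G'" "z = gcomm \<Gamma> y w"
    unfolding Phi_gens_def by blast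
  then show "z \<in> Gn (k + 1)"
    by cases (use pseries_pow_p[OF one_le_k] pseries_gcomm[OF one_le_k] G'_subset_pseries G'_subset_G in blast)+
qed

sublocale Phi_quot: elementary_quotient p m g s G' Phi
proof
  show "\<And>x. x \<in> G' \<Longrightarrow> x [^]\<^bsub>\<Gamma>\<^esub> p \<in> Phi" "\<And>x y. x \<in> G' \<Longrightarrow> y \<in> G' \<Longrightarrow> gcomm \<Gamma> x y \<in> Phi"
    using subset_topgen[of Phi_gens] Phi_eq_topgen unfolding Phi_gens_def by blast+
qed (use g_subset_carrier closed_subgroup_Phi Phi_subset_G' Phi_conj_closed in auto)

lemma gprod_in_pseries_Suc_imp_zero:
  assumes "\<forall>i<s. c i < p" "Phi_quot.gprod c \<in> Gn (k + 1)"
  shows "\<forall>i<s. c i = 0"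
  using lin_indep assms unfolding lin_indep_mod_def pow_prod_def by blast

lemma G'_inter_pseries_Suc: "G' \<inter> Gn (k + 1) = Phi"
proof
  show "Phi \<subseteq> G' \<inter> Gn (k + 1)"
    using Phi_subset_G' Phi_subset_pseries_Suc by blast
  show "G' \<inter> Gn (k + 1) \<subseteq> Phi"
  proof
    fix x assume x: "x \<in> G' \<inter> Gn (k + 1)"
    obtain c h where c: "c \<in> Phi_quot.exps" "h \<in> Phi" "x = h \<otimes>\<^bsub>\<Gamma>\<^esub> Phi_quot.gprod c"
      using Phi_quot.mem_coset_gprod x unfolding r_coset_def by blast
    have carrier: "h \<in> carrier \<Gamma>" "Phi_quot.gprod c \<in> carrier \<Gamma>"
      using c Phi_subset_G' G'_subset_carrier Phi_quot.gprod_in_K by blast+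
    then have "Phi_quot.gprod c = inv\<^bsub>\<Gamma>\<^esub> h \<otimes>\<^bsub>\<Gamma>\<^esub> x"
      using c by simp
    moreover have "inv\<^bsub>\<Gamma>\<^esub> h \<in> Gn (k + 1)"
      using c Phi_subset_pseries_Suc subgroup.m_inv_closed[OF pseries_subgroup] by blast
    ultimately have "Phi_quot.gprod c \<in> Gn (k + 1)"
      using x subgroup.m_closed[OF pseries_subgroup] by simp
    moreover have "\<forall>i<s. c i < p"
      using c by (auto simp: Phi_quot.exps_def)
    ultimately have "\<forall>i<s. c i = 0"
      by (intro gprod_in_pseries_Suc_imp_zero)
    then have "Phi_quot.gprod c = \<one>\<^bsub>\<Gamma>\<^esub>"
      using g_subset_carrier by (intro GL.pow_prod_zero) auto
    then show "x \<in> Phi"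
      using c carrier by simp
  qed
qed

lemma Phi_cosets_eq_image: "{Phi #>\<^bsub>\<Gamma>\<^esub> a | a. a \<in> G'} = (\<lambda>c. Phi #>\<^bsub>\<Gamma>\<^esub> Phi_quot.gprod c) ` Phi_quot.exps"
proof (intro equalityI subsetI)
  fix C assume "C \<in> {Phi #>\<^bsub>\<Gamma>\<^esub> a | a. a \<in> G'}"
  then obtain a where a: "a \<in> G'" "C = Phi #>\<^bsub>\<Gamma>\<^esub> a"
    by blast
  obtain c where c: "c \<in> Phi_quot.exps" "a \<in> Phi #>\<^bsub>\<Gamma>\<^esub> Phi_quot.gprod c"
    using Phi_quot.mem_coset_gprod a by blast
  have "Phi #>\<^bsub>\<Gamma>\<^esub> Phi_quot.gprod c = Phi #>\<^bsub>\<Gamma>\<^esub> a"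
    using GL.repr_independence[OF c(2) _ Phi_quot.subgroup_H] Phi_quot.gprod_in_K G'_subset_carrier by blast
  then show "C \<in> (\<lambda>c. Phi #>\<^bsub>\<Gamma>\<^esub> Phi_quot.gprod c) ` Phi_quot.exps"
    using a c by auto
qed (use Phi_quot.gprod_in_K in blast)

lemma inj_on_Phi_cosets: "inj_on (\<lambda>c. Phi #>\<^bsub>\<Gamma>\<^esub> Phi_quot.gprod c) Phi_quot.exps"
proof (rule inj_onI)
  fix c d assume c: "c \<in> Phi_quot.exps" and d: "d \<in> Phi_quot.exps"
    and eq: "Phi #>\<^bsub>\<Gamma>\<^esub> Phi_quot.gprod c = Phi #>\<^bsub>\<Gamma>\<^esub> Phi_quot.gprod d"
  let ?e = "restrict (\<lambda>i. (c i + (p - d i)) mod p) {..<s}"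
  have "Phi_quot.gprod ?e \<in> Gn (k + 1)"
    using Phi_quot.gprod_diff_in_H[OF c d eq] Phi_subset_pseries_Suc by blast
  moreover have "\<forall>i<s. ?e i < p"
    using two_le_p by simp
  ultimately have "\<forall>i<s. ?e i = 0"
    by (rule gprod_in_pseries_Suc_imp_zero[rotated])
  then show "c = d"
  proof (intro PiE_ext[OF c[unfolded Phi_quot.exps_def] d[unfolded Phi_quot.exps_def]])
    fix i assume i: "i \<in> {..<s}" and "\<forall>i<s. ?e i = 0"
    have "c i < p" "d i < p"
      using c d i by (auto simp: Phi_quot.exps_def)
    moreover have "(c i + (p - d i)) mod p = 0"
      using i \<open>\<forall>i<s. ?e i = 0\<close> by simp
    ultimately show "c i = d i"
      by (rule eq_if_add_diff_mod_eq_0)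
  qed
qed

lemma d_p_G': "d_p p m G' = s"
proof -
  have "card {Phi #>\<^bsub>\<Gamma>\<^esub> a | a. a \<in> G'} = p ^ s"
    unfolding Phi_cosets_eq_image card_image[OF inj_on_Phi_cosets] by (rule Phi_quot.card_exps)
  then show ?thesis
    unfolding d_p_def using two_le_p power_inject_exp[of p _ s] by (intro the_equality) auto
qed

abbreviation "Gs n \<equiv> G' \<inter> Gn (n + k - 1)"

lemma subgroup_Gs: "subgroup (Gs n) \<Gamma>"
  by (rule GL.subgroups_Inter_pair[OF subgroup_G' pseries_subgroup])

lemma Gs_Suc: "Gs (n + 1) = G' \<inter> Gn (n + k - 1 + 1)"
  using one_le_k by (simp add: add.commute add.left_commute)

lemma Gs_Suc_subset: "Gs (n + 1) \<subseteq> Gs n"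
  unfolding Gs_Suc using pseries_Suc_subset by auto

lemma Gs_conj_closed: "x \<in> G' \<Longrightarrow> h \<in> Gs n \<Longrightarrow> x \<otimes>\<^bsub>\<Gamma>\<^esub> h \<otimes>\<^bsub>\<Gamma>\<^esub> inv\<^bsub>\<Gamma>\<^esub> x \<in> Gs n"
  using GL.subgroup_conj_closed[OF subgroup_G'] pseries_conj_closed G'_subset_G by blast

lemma normal_Gs: "Gs n \<lhd> \<Gamma>\<lparr>carrier := G'\<rparr>"
  by (rule GL.normal_in_subgroup[OF subgroup_G' subgroup_Gs _ Gs_conj_closed]) blast

lemma normal_Gs_Suc: "Gs (n + 1) \<lhd> \<Gamma>\<lparr>carrier := Gs n\<rparr>"
  using Gs_conj_closed by (intro GL.normal_in_subgroup[OF subgroup_Gs subgroup_Gs Gs_Suc_subset]) blast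

lemma Gs_pow_p:
  assumes "1 \<le> n" "x \<in> Gs n"
  shows "x [^]\<^bsub>\<Gamma>\<^esub> p \<in> Gs (n + 1)"
  unfolding Gs_Suc
  using GL.subgroup_nat_pow_closed[OF subgroup_G'] pseries_pow_p[of "n + k - 1"] assms one_le_k by auto

lemma Gs_gcomm:
  assumes "1 \<le> n" "x \<in> G'" "y \<in> Gs n"
  shows "gcomm \<Gamma> x y \<in> Gs (n + 1)"
  unfolding Gs_Suc
  using GL.subgroup_gcomm_closed[OF subgroup_G'] pseries_gcomm[of "n + k - 1"] G'_subset_G assms one_le_k
  by auto

lemma comm_group_Gs_quotient: "1 \<le> n \<Longrightarrow> comm_group (\<Gamma>\<lparr>carrier := Gs n\<rparr> Mod Gs (n + 1))"
  using Gs_conj_closed Gs_gcomm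
  by (intro GL.comm_group_FactGroup_if_gcomm[OF subgroup_Gs subgroup_Gs Gs_Suc_subset]) blast+

lemma Gs_quotient_pow_p:
  "1 \<le> n \<Longrightarrow> C \<in> carrier (\<Gamma>\<lparr>carrier := Gs n\<rparr> Mod Gs (n + 1)) \<Longrightarrow>
   C [^]\<^bsub>\<Gamma>\<lparr>carrier := Gs n\<rparr> Mod Gs (n + 1)\<^esub> p = \<one>\<^bsub>\<Gamma>\<lparr>carrier := Gs n\<rparr> Mod Gs (n + 1)\<^esub>"
  using Gs_conj_closed Gs_pow_p
  by (intro GL.FactGroup_nat_pow_eq_one[OF subgroup_Gs subgroup_Gs Gs_Suc_subset]) blast+

text \<open>x y x^-1 y^-1 is the commutator of x^-1 and y^-1, as \<^const>\<open>gcomm\<close> takes the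
  convention [x, y] = x^-1 y^-1 x y.\<close>

lemma Gs_conj_comm:
  assumes "1 \<le> n" "x \<in> G'" "y \<in> Gs n"
  shows "x \<otimes>\<^bsub>\<Gamma>\<^esub> y \<otimes>\<^bsub>\<Gamma>\<^esub> inv\<^bsub>\<Gamma>\<^esub> x \<otimes>\<^bsub>\<Gamma>\<^esub> inv\<^bsub>\<Gamma>\<^esub> y \<in> Gs (n + 1)"
proof -
  have "x \<in> carrier \<Gamma>" "y \<in> carrier \<Gamma>"
    using assms G'_subset_carrier by auto
  then have "x \<otimes>\<^bsub>\<Gamma>\<^esub> y \<otimes>\<^bsub>\<Gamma>\<^esub> inv\<^bsub>\<Gamma>\<^esub> x \<otimes>\<^bsub>\<Gamma>\<^esub> inv\<^bsub>\<Gamma>\<^esub> y = gcomm \<Gamma> (inv\<^bsub>\<Gamma>\<^esub> x) (inv\<^bsub>\<Gamma>\<^esub> y)"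
    by (simp add: gcomm_def)
  moreover have "inv\<^bsub>\<Gamma>\<^esub> x \<in> G'" "inv\<^bsub>\<Gamma>\<^esub> y \<in> Gs n"
    using assms subgroup.m_inv_closed[OF subgroup_G'] subgroup.m_inv_closed[OF subgroup_Gs] by auto
  ultimately show ?thesis
    using Gs_gcomm[OF assms(1)] by simp
qed

lemma popen_Gs:
  assumes "1 \<le> n"
  shows "popen_in p m G' (Gs n)"
  unfolding popen_in_def
proof (intro conjI ballI)
  fix A assume "A \<in> Gs n"
  moreover have "1 \<le> n + k - 1"
    using assms one_le_k by simp
  ultimately obtain N where "\<forall>B\<in>G. B N = A N \<longrightarrow> B \<in> Gn (n + k - 1)"
    using pseries_open by blast
  then show "\<exists>N. \<forall>B\<in>G'. B N = A N \<longrightarrow> B \<in> Gs n"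
    using G'_subset_G by blast
qed blast

lemma Inter_Gs: "(\<Inter>n\<in>{1..}. Gs n) = {\<one>\<^bsub>\<Gamma>\<^esub>}"
proof
  show "{\<one>\<^bsub>\<Gamma>\<^esub>} \<subseteq> (\<Inter>n\<in>{1..}. Gs n)"
    using subgroup.one_closed[OF subgroup_Gs] by blast
  show "(\<Inter>n\<in>{1..}. Gs n) \<subseteq> {\<one>\<^bsub>\<Gamma>\<^esub>}"
  proof
    fix A assume A: "A \<in> (\<Inter>n\<in>{1..}. Gs n)"
    have "A \<in> Gn N" if "1 \<le> N" for N
    proof -
      have "A \<in> Gn (N + k - 1)"
        using A that by auto
      moreover have "N \<le> N + k - 1"
        using one_le_k by simp
      ultimately show ?thesis
        using pseries_antimono by blast
    qed
    then show "A \<in> {\<one>\<^bsub>\<Gamma>\<^esub>}"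
      using pseries_Inter_eq_one by blast
  qed
qed

end

theorem mainTheorem6:
  fixes p m k s :: nat and G :: "pmat set" and g :: "nat \<Rightarrow> pmat"
  defines "\<Gamma> \<equiv> GL1 p m"
    and "G' \<equiv> topgen p m (g ` {..<s})"
    and "Gs \<equiv> (\<lambda>n. topgen p m (g ` {..<s}) \<inter> pseries p m G (n + k - 1))"
  assumes "Factorial_Ring.prime p" and "odd p"
    and "uniform p m G"
    and "k \<ge> 1"
    and "\<forall>i<s. g i \<in> pseries p m G k"
    and "lin_indep_mod p m G k g s"
  shows "d_p p m G' = s \<and> Gs 2 = pstep p m G' G' \<and>
    (\<forall>n\<ge>1. Gs n \<lhd> \<Gamma>\<lparr>carrier := G'\<rparr> \<and>
       Gs (n+1) \<lhd> \<Gamma>\<lparr>carrier := Gs n\<rparr> \<and>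
       comm_group (\<Gamma>\<lparr>carrier := Gs n\<rparr> Mod Gs (n+1)) \<and>
       (\<forall>C\<in>carrier (\<Gamma>\<lparr>carrier := Gs n\<rparr> Mod Gs (n+1)).
           C [^]\<^bsub>\<Gamma>\<lparr>carrier := Gs n\<rparr> Mod Gs (n+1)\<^esub> p = \<one>\<^bsub>\<Gamma>\<lparr>carrier := Gs n\<rparr> Mod Gs (n+1)\<^esub>) \<and>
       (\<forall>x\<in>G'. \<forall>y\<in>Gs n. x \<otimes>\<^bsub>\<Gamma>\<^esub> y \<otimes>\<^bsub>\<Gamma>\<^esub> inv\<^bsub>\<Gamma>\<^esub> x \<otimes>\<^bsub>\<Gamma>\<^esub> inv\<^bsub>\<Gamma>\<^esub> y \<in> Gs (n+1))) \<and>
    (\<forall>n\<ge>1. popen_in p m G' (Gs n)) \<and>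
    (\<Inter>n\<in>{1..}. Gs n) = {\<one>\<^bsub>\<Gamma>\<^esub>}"
proof -
  interpret lin_indep_generators p m G k g s
  proof
    show "2 \<le> p"
      using assms(4) by (rule prime_ge_2_nat)
    show "closed_subgroup p m G"
      using assms(6) by (simp add: uniform_def)
  qed (use assms(6-9) in auto)
  have "Gs 2 = pstep p m G' G'"
    using G'_inter_pseries_Suc by (simp add: Gs_def G'_def add.commute)
  then show ?thesis
    unfolding \<Gamma>_def G'_def Gs_def
    using d_p_G' normal_Gs normal_Gs_Suc comm_group_Gs_quotient Gs_quotient_pow_p Gs_conj_comm
      popen_Gs Inter_Gs by simp
qed

end
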